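(* Let $p\ge1$, $n:=\lfloor p\rfloor$, let $V,U$ be Banach spaces, let $X:[0,T]\to V$ satisfy $\|X\|_{p\text{-var};[0,T]}<\infty$ (no continuity assumed), and let $F\in\mathcal C^{n+1}_b(V,U)$. Then: (1) The limit $$\int_0^TDF(X_t)\,d\mathbb X_t:=\mathrm{RRS}\text{-}\lim_\Pi\sum_{[t_i,t_{i+1}]\in\Pi}\sum_{k=1}^n\frac1{k!}D^kF(X_{t_i})(X_{t_{i+1}}-X_{t_i})^{\otimes k}$$ exists, the series below converge absolutely (they have at most countably many nonzero terms), and $$F(X_T)-F(X_0)=\int_0^TDF(X_t)\,d\mathbb X_t+\sum_{0<t\le T}\Big(F(X_t)-F(X_{t-})-\sum_{k=1}^n\frac1{k!}D^kF(X_{t-})(\Delta^-_tX)^{\otimes k}\Big)+\sum_{0\le t<T}\Big(F(X_{t+})-F(X_t)-\sum_{k=1}^n\frac1{k!}D^kF(X_t)(\Delta^+_tX)^{\otimes k}\Big).$$ (2) If $X$ is càdlàg (right-continuous with left limits), then $$F(X_T)-F(X_0)=\int_0^TDF(X_t)\,d\mathbb X_t+\sum_{0<t\le T}\Big(F(X_t)-F(X_{t-})-\sum_{k=1}^n\frac1{k!}D^kF(X_{t-})(\Delta^-_tX)^{\otimes k}\Big).$$ (3) If $X$ is continuous, then $F(X_T)-F(X_0)=\int_0^TDF(X_t)\,d\mathbb X_t$.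
   Context: Tensor powers carry norms with $\|a\otimes b\|=\|a\|\|b\|$ (e.g. $V$ finite-dimensional). $\|X\|_{p\text{-var};[0,T]}:=(\sup_\Pi\sum_{[t_i,t_{i+1}]\in\Pi}\|X_{t_{i+1}}-X_{t_i}\|^p)^{1/p}$ over partitions $\Pi=\{0=t_0<\dots<t_N=T\}$ of $[0,T]$. A path of finite $p$-variation has left and right limits everywhere; $X_{t-}:=\lim_{u\uparrow t}X_u$, $X_{t+}:=\lim_{u\downarrow t}X_u$, $\Delta^-_tX:=X_t-X_{t-}$, $\Delta^+_tX:=X_{t+}-X_t$. $\mathcal C^k_b(V,U)$ is the set of $k$ times continuously differentiable $F:V\to U$ with $\|D^jF\|_\infty<\infty$ for $j=0,\dots,k$, where $D^jF(x)$ is a bounded symmetric $j$-linear map applied to $h^{\otimes j}$. RRS convergence: sums $S(\Pi)$ converge to $K$ in the refinement Riemann–Stieltjes sense if for every $\varepsilon>0$ there is a partition $\Pi_\varepsilon$ such that $\|S(\Pi)-K\|<\varepsilon$ for every partition $\Pi\supset\Pi_\varepsilon$. *)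

theory Defs
  imports "HOL-Analysis.Analysis"
begin

text \<open>Multilinear maps are represented as functions on lists of arguments:
  M :: 'v list => 'u, meant to be applied to lists of length k.\<close>

definition multilinear_on :: "nat \<Rightarrow> ('v::real_normed_vector list \<Rightarrow> 'u::real_normed_vector) \<Rightarrow> bool" where
  "multilinear_on k M \<longleftrightarrow>
     (\<forall>vs i. length vs = k \<longrightarrow> i < k \<longrightarrow> linear (\<lambda>h. M (vs[i := h])))"

definition symmetric_on :: "nat \<Rightarrow> ('v list \<Rightarrow> 'u) \<Rightarrow> bool" where
  "symmetric_on k M \<longleftrightarrow>
     (\<forall>vs i j. length vs = k \<longrightarrow> i < k \<longrightarrow> j < k \<longrightarrow> M (vs[i := vs ! j, j := vs ! i]) = M vs)"

definition bounded_ml :: "nat \<Rightarrow> ('v::real_normed_vector list \<Rightarrow> 'u::real_normed_vector) \<Rightarrow> bool" where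
  "bounded_ml k M \<longleftrightarrow>
     (\<exists>C. \<forall>vs. length vs = k \<longrightarrow> norm (M vs) \<le> C * prod_list (map norm vs))"

text \<open>F is in C^k_b(V,U), with D j x the j-th Frechet derivative D^jF(x) (a bounded symmetric
  j-linear map). Differentiability and continuity are with respect to the operator norm of
  j-linear maps, written out explicitly.\<close>

definition Ckb :: "nat \<Rightarrow> ('v::real_normed_vector \<Rightarrow> 'u::real_normed_vector) \<Rightarrow> (nat \<Rightarrow> 'v \<Rightarrow> 'v list \<Rightarrow> 'u) \<Rightarrow> bool" where
  "Ckb k F D \<longleftrightarrow>
     (\<forall>x. D 0 x [] = F x) \<and>
     (\<forall>j\<le>k. \<forall>x. multilinear_on j (D j x) \<and> symmetric_on j (D j x) \<and> bounded_ml j (D j x)) \<and>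
     (\<forall>j<k. \<forall>x. \<forall>e>0. \<exists>d>0. \<forall>h. norm h < d \<longrightarrow> (\<forall>vs. length vs = j \<longrightarrow>
        norm (D j (x + h) vs - D j x vs - D (Suc j) x (h # vs)) \<le> e * norm h * prod_list (map norm vs))) \<and>
     (\<forall>j\<le>k. \<forall>x. \<forall>e>0. \<exists>d>0. \<forall>y. dist y x < d \<longrightarrow> (\<forall>vs. length vs = j \<longrightarrow>
        norm (D j y vs - D j x vs) \<le> e * prod_list (map norm vs))) \<and>
     (\<forall>j\<le>k. \<exists>C. \<forall>x vs. length vs = j \<longrightarrow> norm (D j x vs) \<le> C * prod_list (map norm vs))"

definition is_partition :: "real \<Rightarrow> real set \<Rightarrow> bool" where
  "is_partition T P \<longleftrightarrow> finite P \<and> P \<subseteq> {0..T} \<and> 0 \<in> P \<and> T \<in> P"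

definition pnext :: "real set \<Rightarrow> real \<Rightarrow> real" where
  "pnext P t = Min {s \<in> P. t < s}"

definition psum :: "real \<Rightarrow> real set \<Rightarrow> (real \<Rightarrow> real \<Rightarrow> 'a::comm_monoid_add) \<Rightarrow> 'a" where
  "psum T P f = (\<Sum>t\<in>P - {T}. f t (pnext P t))"

definition finite_pvar :: "real \<Rightarrow> real \<Rightarrow> (real \<Rightarrow> 'v::real_normed_vector) \<Rightarrow> bool" where
  "finite_pvar p T X \<longleftrightarrow>
     (\<exists>C. \<forall>P. is_partition T P \<longrightarrow> psum T P (\<lambda>s t. norm (X t - X s) powr p) \<le> C)"

definition rrs_lim :: "real \<Rightarrow> (real set \<Rightarrow> 'a::real_normed_vector) \<Rightarrow> 'a \<Rightarrow> bool" where
  "rrs_lim T S K \<longleftrightarrow>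
     (\<forall>e>0. \<exists>Pe. is_partition T Pe \<and>
        (\<forall>P. is_partition T P \<and> Pe \<subseteq> P \<longrightarrow> norm (S P - K) < e))"

definition rrs_integral :: "real \<Rightarrow> (real set \<Rightarrow> 'a::real_normed_vector) \<Rightarrow> 'a" where
  "rrs_integral T S = (THE K. rrs_lim T S K)"

definition taylor :: "(nat \<Rightarrow> 'v \<Rightarrow> 'v list \<Rightarrow> 'u::real_vector) \<Rightarrow> nat \<Rightarrow> 'v \<Rightarrow> 'v \<Rightarrow> 'u" where
  "taylor D n x h = (\<Sum>k=1..n. (1 / fact k) *\<^sub>R D k x (replicate k h))"

definition rough_sum :: "(nat \<Rightarrow> 'v::real_normed_vector \<Rightarrow> 'v list \<Rightarrow> 'u::real_vector) \<Rightarrow> nat \<Rightarrow> real \<Rightarrow> (real \<Rightarrow> 'v) \<Rightarrow> real set \<Rightarrow> 'u" where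
  "rough_sum D n T X P = psum T P (\<lambda>s t. taylor D n (X s) (X t - X s))"

definition lleft :: "(real \<Rightarrow> 'v::real_normed_vector) \<Rightarrow> real \<Rightarrow> 'v" where
  "lleft X t = Lim (at_left t) X"

definition lright :: "(real \<Rightarrow> 'v::real_normed_vector) \<Rightarrow> real \<Rightarrow> 'v" where
  "lright X t = Lim (at_right t) X"

definition jump_left :: "('v \<Rightarrow> 'u::real_normed_vector) \<Rightarrow> (nat \<Rightarrow> 'v \<Rightarrow> 'v list \<Rightarrow> 'u) \<Rightarrow> nat \<Rightarrow> (real \<Rightarrow> 'v::real_normed_vector) \<Rightarrow> real \<Rightarrow> 'u" where
  "jump_left F D n X t = F (X t) - F (lleft X t) - taylor D n (lleft X t) (X t - lleft X t)"

definition jump_right :: "('v \<Rightarrow> 'u::real_normed_vector) \<Rightarrow> (nat \<Rightarrow> 'v \<Rightarrow> 'v list \<Rightarrow> 'u) \<Rightarrow> nat \<Rightarrow> (real \<Rightarrow> 'v::real_normed_vector) \<Rightarrow> real \<Rightarrow> 'u" where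
  "jump_right F D n X t = F (lright X t) - F (X t) - taylor D n (X t) (lright X t - X t)"

definition cadlag_on :: "real \<Rightarrow> (real \<Rightarrow> 'v::topological_space) \<Rightarrow> bool" where
  "cadlag_on T X \<longleftrightarrow> (\<forall>t\<in>{0..<T}. (X \<longlongrightarrow> X t) (at_right t)) \<and>
                      (\<forall>t\<in>{0<..T}. \<exists>l. (X \<longlongrightarrow> l) (at_left t))"

end

theory Submission
  imports Defs
begin

text \<open>Write \<open>R x y = F y - F x - taylor D n x (y - x)\<close> for the Taylor remainder. The compensated
  Riemann sums are \<open>F (X T) - F (X 0)\<close> minus the sums of \<open>R (X s) (X t)\<close> over the partition
  intervals, and \<open>|R x y| \<le> K |y - x|^(n+1)\<close> with \<open>n + 1 > p\<close>. A path of finite \<open>p\<close>-variation has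
  one-sided limits everywhere, finitely many jumps above any given size, and a partition outside of
  whose points its oscillation is small. A fine enough partition isolates the finitely many large
  jumps in short intervals, where the remainder is close to \<open>R (X t-) (X t)\<close> or \<open>R (X t) (X t+)\<close>;
  on all other intervals the increment is small, and their remainders add up to at most
  \<open>\<eta>^(n+1-p)\<close> times the \<open>p\<close>-variation. So the remainder sums converge to the two jump series.
  Statements about right limits follow from those about left limits by reversing time.\<close>

section \<open>Partitions and nonoverlapping intervals\<close>

lemma pnext_props:
  fixes S :: "real set"
  assumes "finite S" "u \<in> S" "s < u"
  shows "pnext S s \<in> S" "s < pnext S s" "\<And>v. v \<in> S \<Longrightarrow> s < v \<Longrightarrow> pnext S s \<le> v"
proof -
  have "finite {v \<in> S. s < v}" "{v \<in> S. s < v} \<noteq> {}"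
    using assms by auto
  then show "pnext S s \<in> S" "s < pnext S s" "\<And>v. v \<in> S \<Longrightarrow> s < v \<Longrightarrow> pnext S s \<le> v"
    unfolding pnext_def using Min_in Min_le by fastforce+
qed

lemma pnext_eqI:
  fixes S :: "real set"
  assumes "finite S" "t \<in> S" "s < t" "\<And>v. v \<in> S \<Longrightarrow> s < v \<Longrightarrow> t \<le> v"
  shows "pnext S s = t"
  using pnext_props[OF assms(1-3)] assms by (meson antisym)

lemma partition_pnext:
  assumes P: "is_partition T P" and s: "s \<in> P - {T}"
  shows "pnext P s \<in> P" "s < pnext P s" "\<And>v. v \<in> P \<Longrightarrow> s < v \<Longrightarrow> pnext P s \<le> v"
    and "0 \<le> s" "pnext P s \<le> T"
proof -
  have "finite P" "T \<in> P" "s < T" "0 \<le> s"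
    using assms unfolding is_partition_def by auto
  then show "pnext P s \<in> P" "s < pnext P s" "\<And>v. v \<in> P \<Longrightarrow> s < v \<Longrightarrow> pnext P s \<le> v"
    "0 \<le> s" "pnext P s \<le> T"
    using pnext_props by auto
qed

lemma partition_pnext_bij:
  assumes P: "is_partition T P"
  shows "bij_betw (pnext P) (P - {T}) (P - {0})"
proof (rule bij_betw_imageI)
  show "inj_on (pnext P) (P - {T})"
  proof (rule inj_onI)
    fix s s' assume s: "s \<in> P - {T}" "s' \<in> P - {T}" "pnext P s = pnext P s'"
    have "\<not> s < s'" "\<not> s' < s"
      using partition_pnext[OF P s(1)] partition_pnext[OF P s(2)] s by (metis DiffD1 not_le)+
    then show "s = s'" by simp
  qed
  show "pnext P ` (P - {T}) = P - {0}"
  proof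
    show "pnext P ` (P - {T}) \<subseteq> P - {0}"
      using partition_pnext[OF P] by fastforce
    show "P - {0} \<subseteq> pnext P ` (P - {T})"
    proof
      fix a assume a: "a \<in> P - {0}"
      have fin: "finite P" and "P \<subseteq> {0..T}" and z: "0 \<in> P"
        using P unfolding is_partition_def by auto
      define m where "m = Max {u \<in> P. u < a}"
      have lower: "finite {u \<in> P. u < a}" "{u \<in> P. u < a} \<noteq> {}"
        using fin z a \<open>P \<subseteq> {0..T}\<close> by force+
      then have m: "m \<in> P" "m < a" "\<And>v. v \<in> P \<Longrightarrow> v < a \<Longrightarrow> v \<le> m"
        unfolding m_def using Max_in Max_ge by blast+
      have "pnext P m = a"
        using a m by (intro pnext_eqI[OF fin]) (auto simp: not_le[symmetric])
      moreover have "m \<noteq> T"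
        using m \<open>P \<subseteq> {0..T}\<close> a by auto
      ultimately show "a \<in> pnext P ` (P - {T})"
        using m by (metis DiffI image_eqI singletonD)
    qed
  qed
qed

lemma partition_pnext_bij_onto:
  assumes P: "is_partition T P" and S: "S \<subseteq> P"
  shows "bij_betw (pnext P) {s \<in> P - {T}. pnext P s \<in> S} (S - {0})"
proof (rule bij_betw_subset[OF partition_pnext_bij[OF P]])
  have surj: "pnext P ` (P - {T}) = P - {0}"
    using bij_betw_imp_surj_on[OF partition_pnext_bij[OF P]] .
  show "pnext P ` {s \<in> P - {T}. pnext P s \<in> S} = S - {0}"
  proof
    show "pnext P ` {s \<in> P - {T}. pnext P s \<in> S} \<subseteq> S - {0}"
      using surj by auto
    show "S - {0} \<subseteq> pnext P ` {s \<in> P - {T}. pnext P s \<in> S}"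
    proof
      fix a assume "a \<in> S - {0}"
      moreover from this obtain s where "s \<in> P - {T}" "a = pnext P s"
        using surj S by (metis Diff_iff imageE insertI1 subsetD)
      ultimately show "a \<in> pnext P ` {s \<in> P - {T}. pnext P s \<in> S}"
        by blast
    qed
  qed
qed auto

lemma psum_telescope:
  fixes g :: "real \<Rightarrow> 'a::ab_group_add"
  assumes P: "is_partition T P"
  shows "psum T P (\<lambda>s t. g t - g s) = g T - g 0"
proof -
  have fin: "finite P" and T: "T \<in> P" and z: "0 \<in> P"
    using P unfolding is_partition_def by auto
  have "psum T P (\<lambda>s t. g t - g s) = sum g (P - {0}) - sum g (P - {T})"
    unfolding psum_def sum_subtractf sum.reindex_bij_betw[OF partition_pnext_bij[OF P]] ..
  also have "\<dots> = g T - g 0"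
    using fin T z by (simp add: sum_diff1 algebra_simps)
  finally show ?thesis .
qed

definition nonoverlapping_intervals :: "real \<Rightarrow> (real \<times> real) set \<Rightarrow> bool" where
  "nonoverlapping_intervals T I \<longleftrightarrow> finite I \<and>
     (\<forall>a b. (a, b) \<in> I \<longrightarrow> 0 \<le> a \<and> a < b \<and> b \<le> T) \<and>
     (\<forall>a b a' b'. (a, b) \<in> I \<longrightarrow> (a', b') \<in> I \<longrightarrow> (a, b) \<noteq> (a', b') \<longrightarrow> b \<le> a' \<or> b' \<le> a)"

lemma nonoverlapping_intervalsI:
  assumes "finite I" "\<And>a b. (a, b) \<in> I \<Longrightarrow> 0 \<le> a \<and> a < b \<and> b \<le> T"
    "\<And>a b a' b'. (a, b) \<in> I \<Longrightarrow> (a', b') \<in> I \<Longrightarrow> (a, b) \<noteq> (a', b') \<Longrightarrow> b \<le> a' \<or> b' \<le> a"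
  shows "nonoverlapping_intervals T I"
  using assms unfolding nonoverlapping_intervals_def by blast

lemma nonoverlapping_intervalsD:
  assumes "nonoverlapping_intervals T I"
  shows "finite I" "\<And>a b. (a, b) \<in> I \<Longrightarrow> 0 \<le> a \<and> a < b \<and> b \<le> T"
    "\<And>a b a' b'. (a, b) \<in> I \<Longrightarrow> (a', b') \<in> I \<Longrightarrow> (a, b) \<noteq> (a', b') \<Longrightarrow> b \<le> a' \<or> b' \<le> a"
  using assms unfolding nonoverlapping_intervals_def by blast+

lemma partition_nonoverlapping_intervals:
  assumes P: "is_partition T P"
  shows "nonoverlapping_intervals T ((\<lambda>s. (s, pnext P s)) ` (P - {T}))"
proof (rule nonoverlapping_intervalsI)
  show "finite ((\<lambda>s. (s, pnext P s)) ` (P - {T}))"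
    using P unfolding is_partition_def by simp
next
  fix a b
  assume "(a, b) \<in> (\<lambda>s. (s, pnext P s)) ` (P - {T})"
  then show "0 \<le> a \<and> a < b \<and> b \<le> T"
    using partition_pnext[OF P] by auto
next
  fix a b a' b'
  assume "(a, b) \<in> (\<lambda>s. (s, pnext P s)) ` (P - {T})" "(a', b') \<in> (\<lambda>s. (s, pnext P s)) ` (P - {T})"
    and ne: "(a, b) \<noteq> (a', b')"
  then obtain s s' where s: "s \<in> P - {T}" "a = s" "b = pnext P s"
    and s': "s' \<in> P - {T}" "a' = s'" "b' = pnext P s'"
    by blast
  then have "s < s' \<or> s' < s"
    using ne by auto
  then show "b \<le> a' \<or> b' \<le> a"
    using partition_pnext(3)[OF P s(1), of s'] partition_pnext(3)[OF P s'(1), of s] s s' by auto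
qed

lemma psum_eq_sum_intervals:
  assumes "is_partition T P"
  shows "psum T P f = (\<Sum>(a, b)\<in>(\<lambda>s. (s, pnext P s)) ` (P - {T}). f a b)"
  unfolding psum_def by (subst sum.reindex) (auto intro: inj_onI)

lemma nonoverlapping_intervals_endpoints:
  assumes I: "nonoverlapping_intervals T I" and T: "0 \<le> T"
  defines "S \<equiv> {0, T} \<union> fst ` I \<union> snd ` I"
  shows "is_partition T S" and "\<And>a b. (a, b) \<in> I \<Longrightarrow> pnext S a = b"
proof -
  note I = nonoverlapping_intervalsD[OF I]
  show S: "is_partition T S"
    unfolding is_partition_def S_def using I(1,2) T by (force simp: less_imp_le)
  fix a b assume ab: "(a, b) \<in> I"
  show "pnext S a = b"
  proof (rule pnext_eqI)
    show "finite S" "b \<in> S" "a < b"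
      using S I(2)[OF ab] ab unfolding is_partition_def S_def by force+
    fix v assume v: "v \<in> S" "a < v"
    have ab': "0 \<le> a" "a < b" "b \<le> T"
      using I(2)[OF ab] by auto
    consider "v = 0" | "v = T" | b' where "(v, b') \<in> I" | a' where "(a', v) \<in> I"
      using v(1) unfolding S_def by force
    then show "b \<le> v"
    proof cases
      case (3 b')
      then show ?thesis
        using I(3)[OF ab 3] I(2)[OF 3] v(2) by (cases "b = b'") auto
    next
      case (4 a')
      then show ?thesis
        using I(3)[OF ab 4] I(2)[OF 4] ab' v(2) by (cases "a = a'") auto
    qed (use ab' v in auto)
  qed
qed

lemma nonoverlapping_sum_le_psum:
  fixes f :: "real \<Rightarrow> real \<Rightarrow> real"
  assumes I: "nonoverlapping_intervals T I" and T: "0 \<le> T" and f: "\<And>a b. 0 \<le> f a b"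
  shows "(\<Sum>(a, b)\<in>I. f a b) \<le> psum T ({0, T} \<union> fst ` I \<union> snd ` I) f"
proof -
  define S where "S = {0, T} \<union> fst ` I \<union> snd ` I"
  note S = nonoverlapping_intervals_endpoints[OF I T, folded S_def]
  have "inj_on fst I"
    by (rule inj_onI) (use nonoverlapping_intervalsD(2,3)[OF I] in force)
  then have "(\<Sum>(a, b)\<in>I. f a b) = (\<Sum>a\<in>fst ` I. f a (pnext S a))"
    by (subst sum.reindex) (auto simp: S(2) intro!: sum.cong)
  also have "\<dots> \<le> psum T S f"
    unfolding psum_def using S(1) nonoverlapping_intervalsD(2)[OF I] f
    unfolding is_partition_def S_def by (intro sum_mono2) force+
  finally show ?thesis
    unfolding S_def .
qed

lemma tagged_division_of_real_intervalD:
  fixes a b :: real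
  assumes "\<D> tagged_division_of {a..b}" "(x, K) \<in> \<D>"
  shows "x \<in> K" "K \<subseteq> {a..b}" "K = {Inf K..Sup K}" "Inf K \<in> K" "Sup K \<in> K"
proof -
  show "x \<in> K" "K \<subseteq> {a..b}"
    using assms by (blast dest: tagged_division_ofD)+
  obtain c d where K: "K = cbox c d"
    using tagged_division_ofD(4)[OF assms] by blast
  with \<open>x \<in> K\<close> have "c \<le> d"
    by simp
  then show "K = {Inf K..Sup K}" "Inf K \<in> K" "Sup K \<in> K"
    unfolding K cbox_interval by simp_all
qed

lemma tagged_division_points_partition:
  assumes "\<D> tagged_division_of {0..T}" "0 \<le> T"
  shows "is_partition T ({0, T} \<union> (\<Union>(x, K)\<in>\<D>. {x, Inf K, Sup K}))"
  unfolding is_partition_def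
proof (intro conjI)
  show "finite ({0, T} \<union> (\<Union>(x, K)\<in>\<D>. {x, Inf K, Sup K}))"
    using tagged_division_of_finite[OF assms(1)] by auto
  have "{x, Inf K, Sup K} \<subseteq> {0..T}" if "(x, K) \<in> \<D>" for x K
    using tagged_division_of_real_intervalD[OF assms(1) that] by blast
  then show "{0, T} \<union> (\<Union>(x, K)\<in>\<D>. {x, Inf K, Sup K}) \<subseteq> {0..T}"
    using assms(2) by auto
qed simp_all

lemma exists_nonoverlapping_large_increments:
  fixes X :: "real \<Rightarrow> 'a::real_normed_vector"
  assumes large: "\<And>b. b < t \<Longrightarrow> \<exists>u v. b < u \<and> u < v \<and> v < t \<and> e \<le> norm (X v - X u)"
    and t: "0 < t" "t \<le> T"
  shows "\<exists>I. nonoverlapping_intervals T I \<and> card I = N \<and> (\<forall>a b. (a, b) \<in> I \<longrightarrow> b < t \<and> e \<le> norm (X b - X a))"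
proof (induction N)
  case 0
  show ?case
    by (intro exI[of _ "{}"]) (simp add: nonoverlapping_intervals_def)
  next
  case (Suc N)
  then obtain I where I: "nonoverlapping_intervals T I" "card I = N"
    and I_large: "\<And>a b. (a, b) \<in> I \<Longrightarrow> b < t \<and> e \<le> norm (X b - X a)"
    by blast
  note I' = nonoverlapping_intervalsD[OF I(1)]
  define c where "c = Max (insert 0 (snd ` I))"
  have c: "0 \<le> c" "c < t"
    unfolding c_def using I'(1) I_large t by (auto simp: Max_less_iff)
  have c_ge: "b \<le> c" if "(a, b) \<in> I" for a b
    unfolding c_def using I'(1) that by (intro Max_ge) force+
  obtain u v where uv: "c < u" "u < v" "v < t" "e \<le> norm (X v - X u)"
    using large[OF c(2)] by blast
  have "nonoverlapping_intervals T (insert (u, v) I)"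
  proof (rule nonoverlapping_intervalsI)
    fix a b a' b'
    assume "(a, b) \<in> insert (u, v) I" "(a', b') \<in> insert (u, v) I" "(a, b) \<noteq> (a', b')"
    then show "b \<le> a' \<or> b' \<le> a"
      using I'(3) c_ge[of a b] c_ge[of a' b'] uv by auto
  qed (use I'(1,2) c uv t in auto)
  moreover have "(u, v) \<notin> I"
    using c_ge[of u v] uv by force
  then have "card (insert (u, v) I) = Suc N"
    using I'(1) I(2) by simp
  ultimately show ?case
    using I_large uv by (intro exI[of _ "insert (u, v) I"]) auto
qed

lemma eventually_nonoverlapping_left_shifts:
  assumes S: "finite S" "S \<subseteq> {0<..T}"
  shows "eventually (\<lambda>h. nonoverlapping_intervals T ((\<lambda>t. (t - h, t)) ` S)) (at_right 0)"
proof -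
  have "\<forall>t\<in>S. \<forall>t'\<in>S. eventually (\<lambda>h. h < t \<and> (t \<noteq> t' \<longrightarrow> h < \<bar>t - t'\<bar>)) (at_right (0::real))"
  proof (intro ballI)
    fix t t' assume "t \<in> S" "t' \<in> S"
    then have "0 < (if t = t' then t else min t \<bar>t - t'\<bar>)"
      using S(2) by auto
    from eventually_at_right_real[OF this] show "eventually (\<lambda>h. h < t \<and> (t \<noteq> t' \<longrightarrow> h < \<bar>t - t'\<bar>)) (at_right 0)"
      by eventually_elim (auto split: if_splits)
  qed
  then have "eventually (\<lambda>h. 0 < h \<and> (\<forall>t\<in>S. \<forall>t'\<in>S. h < t \<and> (t \<noteq> t' \<longrightarrow> h < \<bar>t - t'\<bar>))) (at_right 0)"
    using S(1) eventually_at_right_less[of 0] by (simp add: eventually_ball_finite_distrib eventually_conj_iff)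
  then show ?thesis
  proof eventually_elim
    case (elim h)
    show ?case
    proof (rule nonoverlapping_intervalsI)
      fix a b assume "(a, b) \<in> (\<lambda>t. (t - h, t)) ` S"
      then show "0 \<le> a \<and> a < b \<and> b \<le> T"
        using elim S(2) by force
    next
      fix a b a' b'
      assume "(a, b) \<in> (\<lambda>t. (t - h, t)) ` S" "(a', b') \<in> (\<lambda>t. (t - h, t)) ` S" "(a, b) \<noteq> (a', b')"
      then obtain t t' where "t \<in> S" "t' \<in> S" "t \<noteq> t'" "a = t - h" "b = t" "a' = t' - h" "b' = t'"
        by blast
      moreover from this have "h < \<bar>t - t'\<bar>"
        using elim by blast
      ultimately show "b \<le> a' \<or> b' \<le> a"
        by auto
    qed (use S(1) in simp)
  qed
qed

lemma rrs_lim_unique: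
  assumes "rrs_lim T S K1" "rrs_lim T S K2"
  shows "K1 = K2"
proof (rule ccontr)
  assume "K1 \<noteq> K2"
  define e where "e = norm (K1 - K2) / 2"
  have e: "0 < e"
    using \<open>K1 \<noteq> K2\<close> unfolding e_def by simp
  obtain P1 where P1: "is_partition T P1" "\<And>P. is_partition T P \<and> P1 \<subseteq> P \<Longrightarrow> norm (S P - K1) < e"
    using assms(1) e unfolding rrs_lim_def by blast
  obtain P2 where P2: "is_partition T P2" "\<And>P. is_partition T P \<and> P2 \<subseteq> P \<Longrightarrow> norm (S P - K2) < e"
    using assms(2) e unfolding rrs_lim_def by blast
  have P: "is_partition T (P1 \<union> P2)"
    using P1(1) P2(1) unfolding is_partition_def by auto
  have "norm (K1 - K2) \<le> norm (S (P1 \<union> P2) - K1) + norm (S (P1 \<union> P2) - K2)"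
    using norm_triangle_ineq4[of "S (P1 \<union> P2) - K2" "S (P1 \<union> P2) - K1"] by (simp add: norm_minus_commute)
  also have "\<dots> < 2 * e"
    using P1(2)[of "P1 \<union> P2"] P2(2)[of "P1 \<union> P2"] P by auto
  finally show False
    unfolding e_def by simp
qed

lemma rrs_integral_eqI: "rrs_lim T S K \<Longrightarrow> rrs_integral T S = K"
  unfolding rrs_integral_def by (rule the_equality) (auto intro: rrs_lim_unique)

lemma rrs_lim_const_minus:
  assumes lim: "rrs_lim T S K" and S': "\<And>P. is_partition T P \<Longrightarrow> S' P = c - S P"
  shows "rrs_lim T S' (c - K)"
  unfolding rrs_lim_def
proof (intro allI impI)
  fix e :: real assume "0 < e"
  then obtain Pe where "is_partition T Pe" "\<forall>P. is_partition T P \<and> Pe \<subseteq> P \<longrightarrow> norm (S P - K) < e"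
    using lim[unfolded rrs_lim_def, rule_format] by blast
  moreover have "norm (S' P - (c - K)) = norm (S P - K)" if "is_partition T P" for P
    using S'[OF that] by (simp add: norm_minus_commute)
  ultimately show "\<exists>Pe. is_partition T Pe \<and> (\<forall>P. is_partition T P \<and> Pe \<subseteq> P \<longrightarrow> norm (S' P - (c - K)) < e)"
    by auto
qed

section \<open>Taylor remainders of \<open>C\<^sup>k\<^sub>b\<close> maps\<close>

lemma multilinear_on_linear:
  assumes "multilinear_on k M" "length vs = k" "i < k"
  shows "linear (\<lambda>h. M (vs[i := h]))"
  using assms unfolding multilinear_on_def by auto

lemma multilinear_replicate_diff:
  assumes ml: "multilinear_on k M"
  shows "M (replicate k w) - M (replicate k v) = (\<Sum>i<k. M (replicate i w @ (w - v) # replicate (k - Suc i) v))"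
proof -
  define U where "U i x = replicate i w @ x # replicate (k - Suc i) v" for i x
  define L where "L i = M (replicate i w @ replicate (k - i) v)" for i
  have "M (U i w) - M (U i v) = L (Suc i) - L i" if "i < k" for i
  proof -
    have "k - i = Suc (k - Suc i)"
      using that by simp
    then show ?thesis
      unfolding U_def L_def by (simp add: replicate_append_same[symmetric])
  qed
  then have "M (replicate k w) - M (replicate k v) = (\<Sum>i<k. M (U i w) - M (U i v))"
    using sum_lessThan_telescope[of L k] unfolding L_def by simp
  also have "\<dots> = (\<Sum>i<k. M (U i (w - v)))"
  proof (rule sum.cong)
    fix i assume "i \<in> {..<k}"
    then have i: "i < k" and len: "length (U i v) = k"
      unfolding U_def by simp_all
    have "(U i v)[i := x] = U i x" for x
      unfolding U_def by (simp add: list_update_append)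
    then show "M (U i w) - M (U i v) = M (U i (w - v))"
      using linear_diff[OF multilinear_on_linear[OF ml len i], of w v] by simp
  qed simp
  finally show ?thesis
    unfolding U_def .
qed

lemma multilinear_replicate_diff_bound:
  fixes M :: "'v::real_normed_vector list \<Rightarrow> 'u::real_normed_vector"
  assumes ml: "multilinear_on k M"
    and bd: "\<And>vs. length vs = k \<Longrightarrow> norm (M vs) \<le> C * prod_list (map norm vs)"
    and C: "0 \<le> C" and v: "norm v \<le> B" and w: "norm w \<le> B"
  shows "norm (M (replicate k w) - M (replicate k v)) \<le> real k * (C * B ^ (k - 1) * norm (w - v))"
proof -
  have B: "0 \<le> B"
    using v norm_ge_zero order_trans by blast
  have "norm (M (replicate i w @ (w - v) # replicate (k - Suc i) v)) \<le> C * (B ^ (k - 1) * norm (w - v))"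
    if i: "i < k" for i
  proof -
    have "prod_list (map norm (replicate i w @ (w - v) # replicate (k - Suc i) v))
        = norm w ^ i * (norm (w - v) * norm v ^ (k - Suc i))"
      by simp
    also have "\<dots> \<le> B ^ i * (norm (w - v) * B ^ (k - Suc i))"
      using B v w by (intro mult_mono power_mono mult_left_mono) auto
    also have "\<dots> = B ^ (k - 1) * norm (w - v)"
      using i by (simp add: power_add[symmetric] algebra_simps)
    finally show ?thesis
      using bd[of "replicate i w @ (w - v) # replicate (k - Suc i) v"] i C
      by (simp add: order_trans[OF _ mult_left_mono])
  qed
  then have "norm (\<Sum>i<k. M (replicate i w @ (w - v) # replicate (k - Suc i) v))
      \<le> (\<Sum>i<k. C * (B ^ (k - 1) * norm (w - v)))"
    by (intro order_trans[OF norm_sum sum_mono]) simp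
  then show ?thesis
    unfolding multilinear_replicate_diff[OF ml] by (simp add: mult.assoc)
qed

lemma Ckb_D0: "Ckb k F D \<Longrightarrow> D 0 x [] = F x"
  unfolding Ckb_def by simp

lemma Ckb_multilinear: "Ckb k F D \<Longrightarrow> j \<le> k \<Longrightarrow> multilinear_on j (D j x)"
  unfolding Ckb_def by simp

lemma Ckb_bounded:
  assumes "Ckb k F D" "j \<le> k"
  obtains C where "0 \<le> C" "\<And>x vs. length vs = j \<Longrightarrow> norm (D j x vs) \<le> C * prod_list (map norm vs)"
proof -
  have "\<forall>j\<le>k. \<exists>C. \<forall>x vs. length vs = j \<longrightarrow> norm (D j x vs) \<le> C * prod_list (map norm vs)"
    using assms(1) unfolding Ckb_def by (elim conjE)
  then obtain C where C: "\<And>x vs. length vs = j \<Longrightarrow> norm (D j x vs) \<le> C * prod_list (map norm vs)"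
    using assms(2) by blast
  have "0 \<le> prod_list (map norm vs)" for vs :: "'a list"
    by (induction vs) auto
  then have "C * prod_list (map norm vs) \<le> max C 0 * prod_list (map norm vs)" for vs :: "'a list"
    by (intro mult_right_mono) auto
  then show ?thesis
    using C by (intro that[of "max C 0"]) (auto intro: order_trans)
qed

lemma Ckb_continuous:
  assumes "Ckb k F D" "j \<le> k" "0 < e"
  obtains d where "0 < d" "\<And>y vs. dist y x < d \<Longrightarrow> length vs = j \<Longrightarrow>
    norm (D j y vs - D j x vs) \<le> e * prod_list (map norm vs)"
proof -
  have "\<forall>j\<le>k. \<forall>x. \<forall>e>0. \<exists>d>0. \<forall>y. dist y x < d \<longrightarrow> (\<forall>vs. length vs = j \<longrightarrow>
      norm (D j y vs - D j x vs) \<le> e * prod_list (map norm vs))"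
    using assms(1) unfolding Ckb_def by (elim conjE)
  then show ?thesis
    using assms(2,3) that by blast
qed

lemma Ckb_differential:
  assumes "Ckb k F D" "j < k" "0 < e"
  obtains d where "0 < d" "\<And>h vs. norm h < d \<Longrightarrow> length vs = j \<Longrightarrow>
    norm (D j (x + h) vs - D j x vs - D (Suc j) x (h # vs)) \<le> e * norm h * prod_list (map norm vs)"
proof -
  have "\<forall>j<k. \<forall>x. \<forall>e>0. \<exists>d>0. \<forall>h. norm h < d \<longrightarrow> (\<forall>vs. length vs = j \<longrightarrow>
      norm (D j (x + h) vs - D j x vs - D (Suc j) x (h # vs)) \<le> e * norm h * prod_list (map norm vs))"
    using assms(1) unfolding Ckb_def by (elim conjE)
  then show ?thesis
    using assms(2,3) that by blast
qed

lemma Ckb_tendsto_base: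
  fixes D :: "nat \<Rightarrow> 'v::real_normed_vector \<Rightarrow> 'v list \<Rightarrow> 'u::real_normed_vector"
  assumes ck: "Ckb N F D" and k: "k \<le> N" and vs: "length vs = k" and f: "(f \<longlongrightarrow> x) G"
  shows "((\<lambda>t. D k (f t) vs) \<longlongrightarrow> D k x vs) G"
proof (rule tendstoI)
  fix e :: real assume e: "0 < e"
  define \<kappa> where "\<kappa> = prod_list (map norm vs)"
  have \<kappa>: "0 \<le> \<kappa>"
    unfolding \<kappa>_def by (induction vs) auto
  with e have "0 < e / (\<kappa> + 1)"
    by simp
  then obtain d where d: "0 < d" "\<And>y. dist y x < d \<Longrightarrow> norm (D k y vs - D k x vs) \<le> e / (\<kappa> + 1) * \<kappa>"
    using Ckb_continuous[OF ck k, of "e / (\<kappa> + 1)" x] vs unfolding \<kappa>_def by metis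
  have "e / (\<kappa> + 1) * \<kappa> < e"
    using e \<kappa> by (simp add: field_simps)
  with d show "eventually (\<lambda>t. dist (D k (f t) vs) (D k x vs) < e) G"
    using tendstoD[OF f d(1)] by (auto elim!: eventually_mono simp: dist_norm intro: le_less_trans)
qed

lemma Ckb_tendsto:
  fixes D :: "nat \<Rightarrow> 'v::real_normed_vector \<Rightarrow> 'v list \<Rightarrow> 'u::real_normed_vector"
  assumes ck: "Ckb N F D" and k: "k \<le> N" and f: "(f \<longlongrightarrow> x) G" and g: "(g \<longlongrightarrow> h) G"
  shows "((\<lambda>t. D k (f t) (replicate k (g t))) \<longlongrightarrow> D k x (replicate k h)) G"
proof -
  obtain C where C: "0 \<le> C" "\<And>x vs. length vs = k \<Longrightarrow> norm (D k x vs) \<le> C * prod_list (map norm vs)"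
    using Ckb_bounded[OF ck k] by blast
  define L where "L = real k * C * (norm h + 1) ^ (k - 1)"
  have "((\<lambda>t. D k (f t) (replicate k (g t)) - D k (f t) (replicate k h)) \<longlongrightarrow> 0) G"
  proof (rule Lim_null_comparison)
    show "eventually (\<lambda>t. norm (D k (f t) (replicate k (g t)) - D k (f t) (replicate k h)) \<le> L * norm (g t - h)) G"
      using tendstoD[OF g zero_less_one]
    proof eventually_elim
      case (elim t)
      then have "norm (g t) \<le> norm h + 1"
        using norm_triangle_sub[of "g t" h] by (simp add: dist_norm)
      then show ?case
        using multilinear_replicate_diff_bound[OF Ckb_multilinear[OF ck k] C(2) C(1), of h "norm h + 1" "g t"]
        unfolding L_def by (simp add: mult.assoc)
    qed
    show "((\<lambda>t. L * norm (g t - h)) \<longlongrightarrow> 0) G"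
      using tendsto_mult_right_zero[OF tendsto_norm_zero[OF LIM_zero[OF g]]] .
  qed
  from tendsto_add[OF this Ckb_tendsto_base[OF ck k _ f, of "replicate k h"]] show ?thesis
    by simp
qed

lemma Ckb_first_slot_linear:
  assumes ck: "Ckb N F D" and i: "i < N" and vs: "length vs = i"
  shows "linear (\<lambda>h. D (Suc i) x (h # vs))"
  using multilinear_on_linear[OF Ckb_multilinear[OF ck], of "Suc i" "0 # vs" 0] i vs by simp

lemma Ckb_has_derivative:
  fixes D :: "nat \<Rightarrow> 'v::real_normed_vector \<Rightarrow> 'v list \<Rightarrow> 'u::real_normed_vector"
  assumes ck: "Ckb N F D" and i: "i < N" and vs: "length vs = i"
  shows "((\<lambda>x. D i x vs) has_derivative (\<lambda>h. D (Suc i) x (h # vs))) (at x)"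
  unfolding has_derivative_at_alt
proof (intro conjI allI impI)
  define \<kappa> where "\<kappa> = prod_list (map norm vs)"
  have \<kappa>: "0 \<le> \<kappa>"
    unfolding \<kappa>_def by (induction vs) auto
  obtain C where C: "\<And>x vs. length vs = Suc i \<Longrightarrow> norm (D (Suc i) x vs) \<le> C * prod_list (map norm vs)"
    using Ckb_bounded[OF ck Suc_leI[OF i]] by blast
  have bound: "norm (D (Suc i) x (h # vs)) \<le> norm h * (C * \<kappa>)" for h
    using C[of "h # vs"] vs unfolding \<kappa>_def by (simp add: mult_ac)
  moreover note lin = Ckb_first_slot_linear[OF ck i vs, of x]
  ultimately show "bounded_linear (\<lambda>h. D (Suc i) x (h # vs))"
    by (intro bounded_linear_intro[where K = "C * \<kappa>"] linear_add[OF lin] linear_scale[OF lin] bound)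
  fix e :: real assume e: "0 < e"
  then have e': "0 < e / (\<kappa> + 1)"
    using \<kappa> by simp
  obtain d where d: "0 < d" and small: "\<And>h vs. norm h < d \<Longrightarrow> length vs = i \<Longrightarrow>
      norm (D i (x + h) vs - D i x vs - D (Suc i) x (h # vs)) \<le> e / (\<kappa> + 1) * norm h * prod_list (map norm vs)"
    using Ckb_differential[OF ck i e'] by blast
  have factor: "e / (\<kappa> + 1) * \<kappa> \<le> e"
    using e \<kappa> by (simp add: field_simps)
  show "\<exists>d>0. \<forall>y. norm (y - x) < d \<longrightarrow> norm (D i y vs - D i x vs - D (Suc i) x ((y - x) # vs)) \<le> e * norm (y - x)"
  proof (intro exI[of _ d] conjI allI impI d)
    fix y assume "norm (y - x) < d"
    then have "norm (D i y vs - D i x vs - D (Suc i) x ((y - x) # vs)) \<le> e / (\<kappa> + 1) * \<kappa> * norm (y - x)"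
      using small[of "y - x" vs] vs unfolding \<kappa>_def by (simp add: mult_ac)
    also have "\<dots> \<le> e * norm (y - x)"
      using factor by (rule mult_right_mono) simp
    finally show "norm (D i y vs - D i x vs - D (Suc i) x ((y - x) # vs)) \<le> e * norm (y - x)" .
  qed
qed

lemma Ckb_has_vector_derivative_line:
  fixes D :: "nat \<Rightarrow> 'v::real_normed_vector \<Rightarrow> 'v list \<Rightarrow> 'u::real_normed_vector"
  assumes ck: "Ckb N F D" and i: "i < N"
  shows "((\<lambda>v. D i (x + v *\<^sub>R h) (replicate i h)) has_vector_derivative
           D (Suc i) (x + v *\<^sub>R h) (replicate (Suc i) h)) (at v)"
proof -
  have line: "((\<lambda>v. x + v *\<^sub>R h) has_derivative (\<lambda>c. c *\<^sub>R h)) (at v)"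
    by (auto intro!: derivative_eq_intros)
  have "((\<lambda>v. D i (x + v *\<^sub>R h) (replicate i h)) has_derivative
      (\<lambda>c. D (Suc i) (x + v *\<^sub>R h) ((c *\<^sub>R h) # replicate i h))) (at v)"
    using has_derivative_compose[OF line Ckb_has_derivative[OF ck i]] by simp
  moreover have "D (Suc i) (x + v *\<^sub>R h) ((c *\<^sub>R h) # replicate i h) = c *\<^sub>R D (Suc i) (x + v *\<^sub>R h) (replicate (Suc i) h)"
    for c
    using linear_scale[OF Ckb_first_slot_linear[OF ck i, of "replicate i h"]] by simp
  ultimately show ?thesis
    unfolding has_vector_derivative_def by simp
qed

definition taylor_remainder ::
    "('v::real_vector \<Rightarrow> 'u::real_vector) \<Rightarrow> (nat \<Rightarrow> 'v \<Rightarrow> 'v list \<Rightarrow> 'u) \<Rightarrow> nat \<Rightarrow> 'v \<Rightarrow> 'v \<Rightarrow> 'u" where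
  "taylor_remainder F D n x y = F y - F x - taylor D n x (y - x)"

lemma taylor_remainder_has_integral:
  fixes D :: "nat \<Rightarrow> 'v::real_normed_vector \<Rightarrow> 'v list \<Rightarrow> 'u::banach"
  assumes ck: "Ckb (Suc n) F D"
  shows "((\<lambda>t. ((1 - t) ^ n / fact n) *\<^sub>R D (Suc n) (x + t *\<^sub>R (y - x)) (replicate (Suc n) (y - x)))
    has_integral taylor_remainder F D n x y) {0..1}"
proof -
  define h where "h = y - x"
  define g where "g i v = D i (x + v *\<^sub>R h) (replicate i h)" for i v
  have deriv: "(g m has_vector_derivative g (Suc m) t) (at t within {0..1})" if "m < Suc n" for m t
    unfolding g_def using Ckb_has_vector_derivative_line[OF ck that] by (rule has_vector_derivative_at_within)
  have "((\<lambda>t. ((1 - t) ^ n / fact n) *\<^sub>R g (Suc n) t) has_integral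
      g 0 1 - (\<Sum>i<Suc n. ((1 - 0) ^ i / fact i) *\<^sub>R g i 0)) {0..1}"
    using Taylor_has_integral[where p = "Suc n" and Df = g and f = "g 0" and a = 0 and b = 1, OF _ refl]
    by (simp add: deriv)
  also have "(\<Sum>i<Suc n. ((1 - 0) ^ i / fact i) *\<^sub>R g i 0) = F x + taylor D n x h"
    unfolding taylor_def g_def sum.lessThan_Suc_shift One_nat_def sum.atLeast1_atMost_eq
    using Ckb_D0[OF ck] by simp
  also have "g 0 1 = F y"
    unfolding g_def h_def using Ckb_D0[OF ck] by simp
  finally show ?thesis
    unfolding taylor_remainder_def g_def h_def by (simp add: diff_diff_eq)
qed

lemma taylor_remainder_bound:
  fixes D :: "nat \<Rightarrow> 'v::real_normed_vector \<Rightarrow> 'v list \<Rightarrow> 'u::banach"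
  assumes ck: "Ckb (Suc n) F D"
  obtains K where "0 \<le> K" "\<And>x y. norm (taylor_remainder F D n x y) \<le> K * norm (y - x) ^ Suc n"
proof -
  obtain C where C: "0 \<le> C" "\<And>x vs. length vs = Suc n \<Longrightarrow> norm (D (Suc n) x vs) \<le> C * prod_list (map norm vs)"
    using Ckb_bounded[OF ck order_refl] by blast
  have "norm (taylor_remainder F D n x y) \<le> C * norm (y - x) ^ Suc n" for x y
  proof -
    define f where "f t = D (Suc n) (x + t *\<^sub>R (y - x)) (replicate (Suc n) (y - x))" for t
    have bound: "norm (((1 - t) ^ n / fact n) *\<^sub>R f t) \<le> C * norm (y - x) ^ Suc n" if "t \<in> cbox 0 1" for t :: real
    proof -
      have "(1 - t) ^ n \<le> 1"
        using that by (intro power_le_one) auto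
      also have "(1 :: real) \<le> fact n"
        by (rule fact_ge_1)
      finally have c: "0 \<le> (1 - t) ^ n / fact n" "(1 - t) ^ n / fact n \<le> 1"
        using that by auto
      have "norm (((1 - t) ^ n / fact n) *\<^sub>R f t) \<le> norm (f t)"
        unfolding norm_scaleR abs_of_nonneg[OF c(1)] by (rule mult_left_le_one_le[OF norm_ge_zero c])
      also have "\<dots> \<le> C * norm (y - x) ^ Suc n"
        using C(2)[of "replicate (Suc n) (y - x)"] unfolding f_def by (simp add: prod_list_replicate)
      finally show ?thesis .
    qed
    have "((\<lambda>t. ((1 - t) ^ n / fact n) *\<^sub>R f t) has_integral taylor_remainder F D n x y) (cbox 0 1)"
      using taylor_remainder_has_integral[OF ck] unfolding f_def by simp
    from has_integral_bound[OF _ this bound] C(1) show ?thesis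
      by simp
  qed
  with C(1) show ?thesis
    by (rule that)
qed

lemma taylor_remainder_tendsto:
  fixes D :: "nat \<Rightarrow> 'v::real_normed_vector \<Rightarrow> 'v list \<Rightarrow> 'u::real_normed_vector"
  assumes ck: "Ckb (Suc n) F D" and f: "(f \<longlongrightarrow> x) G" and g: "(g \<longlongrightarrow> y) G"
  shows "((\<lambda>t. taylor_remainder F D n (f t) (g t)) \<longlongrightarrow> taylor_remainder F D n x y) G"
proof -
  have F: "F z = D 0 z (replicate 0 z)" for z
    using Ckb_D0[OF ck] by simp
  have "((\<lambda>t. D k (f t) (replicate k (g t - f t))) \<longlongrightarrow> D k x (replicate k (y - x))) G"
    if "k \<le> Suc n" for k
    using Ckb_tendsto[OF ck that f tendsto_diff[OF g f]] .
  moreover have "((\<lambda>t. F (h t)) \<longlongrightarrow> F z) G" if "(h \<longlongrightarrow> z) G" for h z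
    unfolding F using Ckb_tendsto[OF ck _ that that, of 0] by simp
  ultimately show ?thesis
    unfolding taylor_remainder_def taylor_def using f g
    by (intro tendsto_diff tendsto_sum tendsto_scaleR tendsto_const) auto
qed

lemma rough_sum_eq_taylor_remainder:
  assumes "is_partition T P"
  shows "rough_sum D n T X P = F (X T) - F (X 0) - psum T P (\<lambda>s t. taylor_remainder F D n (X s) (X t))"
proof -
  have "rough_sum D n T X P = psum T P (\<lambda>s t. F (X t) - F (X s)) - psum T P (\<lambda>s t. taylor_remainder F D n (X s) (X t))"
    unfolding rough_sum_def psum_def taylor_remainder_def sum_subtractf[symmetric] by simp
  then show ?thesis
    using psum_telescope[OF assms, of "\<lambda>t. F (X t)"] by simp
qed

lemma jump_left_eq_taylor_remainder: "jump_left F D n X t = taylor_remainder F D n (lleft X t) (X t)"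
  unfolding jump_left_def taylor_remainder_def ..

lemma jump_right_eq_taylor_remainder: "jump_right F D n X t = taylor_remainder F D n (X t) (lright X t)"
  unfolding jump_right_def taylor_remainder_def ..

lemma tendsto_at_left_reflect:
  fixes X :: "real \<Rightarrow> 'a::topological_space"
  shows "((\<lambda>t. X (T - t)) \<longlongrightarrow> l) (at_left s) \<longleftrightarrow> (X \<longlongrightarrow> l) (at_right (T - s))"
proof -
  have "at_right (T - s) = filtermap (\<lambda>t. T - t) (at_left s)"
    using filtermap_at_right_shift[of "-T" "-s"] at_right_minus[of "-s"]
    by (simp add: filtermap_filtermap)
  then show ?thesis
    by (simp add: filterlim_filtermap)
qed

lemma tendsto_at_right_reflect:
  fixes X :: "real \<Rightarrow> 'a::topological_space"
  shows "((\<lambda>t. X (T - t)) \<longlongrightarrow> l) (at_right s) \<longleftrightarrow> (X \<longlongrightarrow> l) (at_left (T - s))"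
  using tendsto_at_left_reflect[of "\<lambda>t. X (T - t)" T l "T - s"] by simp

lemma lleft_reflect: "lleft (\<lambda>t. X (T - t)) s = lright X (T - s)"
  unfolding lleft_def lright_def t2_space_class.Lim_def tendsto_at_left_reflect[of X T] ..

lemma lleft_eq: "(X \<longlongrightarrow> X t) (at_left t) \<Longrightarrow> lleft X t = X t"
  unfolding lleft_def by (rule tendsto_Lim[OF trivial_limit_at_left_real])

lemma lright_eq: "(X \<longlongrightarrow> X t) (at_right t) \<Longrightarrow> lright X t = X t"
  unfolding lright_def by (rule tendsto_Lim[OF trivial_limit_at_right_real])

lemma continuous_on_Icc_one_sided_limits:
  fixes X :: "real \<Rightarrow> 'a::topological_space"
  assumes X: "continuous_on {a..b} X"
  shows "t \<in> {a..<b} \<Longrightarrow> (X \<longlongrightarrow> X t) (at_right t)" and "t \<in> {a<..b} \<Longrightarrow> (X \<longlongrightarrow> X t) (at_left t)"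
proof -
  assume t: "t \<in> {a..<b}"
  have "continuous_on {t..b} X"
    using X by (rule continuous_on_subset) (use t in auto)
  then show "(X \<longlongrightarrow> X t) (at_right t)"
    by (rule continuous_on_Icc_at_rightD) (use t in auto)
next
  assume t: "t \<in> {a<..b}"
  have "continuous_on {a..t} X"
    using X by (rule continuous_on_subset) (use t in auto)
  then show "(X \<longlongrightarrow> X t) (at_left t)"
    by (rule continuous_on_Icc_at_leftD) (use t in auto)
qed

lemma finite_if_sum_powr_bounded:
  fixes f :: "'a \<Rightarrow> real"
  assumes "0 < d" "0 < p" and bound: "\<And>G. finite G \<Longrightarrow> G \<subseteq> A \<Longrightarrow> (\<Sum>t\<in>G. f t powr p) \<le> C"
  shows "finite {t \<in> A. d \<le> f t}"
proof (rule finite_if_finite_subsets_card_bdd[THEN conjunct1])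
  fix G assume G: "G \<subseteq> {t \<in> A. d \<le> f t}" "finite G"
  have "real (card G) * d powr p = (\<Sum>t\<in>G. d powr p)"
    by simp
  also have "\<dots> \<le> (\<Sum>t\<in>G. f t powr p)"
    using G assms(1,2) by (intro sum_mono powr_mono2) auto
  also have "\<dots> \<le> C"
    using bound G by auto
  finally have "real (card G) \<le> C / d powr p"
    using assms(1) by (simp add: le_divide_eq)
  then have "int (card G) \<le> \<lceil>C / d powr p\<rceil>"
    by (simp add: le_ceiling_iff)
  then show "card G \<le> nat \<lceil>C / d powr p\<rceil>"
    using nat_mono by fastforce
qed

lemma summable_on_norm_if_dominated:
  fixes f :: "'a \<Rightarrow> 'b::real_normed_vector"
  assumes "\<And>t. t \<in> A \<Longrightarrow> norm (f t) \<le> c * g t" "0 \<le> c"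
    and "\<And>G. finite G \<Longrightarrow> G \<subseteq> A \<Longrightarrow> sum g G \<le> B"
  shows "(\<lambda>t. norm (f t)) summable_on A"
proof (rule nonneg_bdd_above_summable_on)
  show "bdd_above (sum (\<lambda>t. norm (f t)) ` {G. G \<subseteq> A \<and> finite G})"
  proof (rule bdd_aboveI2)
    fix G assume "G \<in> {G. G \<subseteq> A \<and> finite G}"
    then have "(\<Sum>t\<in>G. norm (f t)) \<le> c * sum g G" "sum g G \<le> B"
      using assms by (auto simp: sum_distrib_left intro: sum_mono)
    then show "(\<Sum>t\<in>G. norm (f t)) \<le> c * B"
      using assms(2) by (meson mult_left_mono order_trans)
  qed
qed simp

lemma summable_on_finite_approx:
  fixes f :: "'a \<Rightarrow> 'b::banach"
  assumes "f summable_on A" "0 < e"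
  obtains S where "finite S" "S \<subseteq> A"
    "\<And>G. finite G \<Longrightarrow> S \<subseteq> G \<Longrightarrow> G \<subseteq> A \<Longrightarrow> norm (sum f G - infsum f A) < e"
proof -
  have "(sum f \<longlongrightarrow> infsum f A) (finite_subsets_at_top A)"
    using has_sum_infsum[OF assms(1)] by (simp add: has_sum_def)
  then have "eventually (\<lambda>G. dist (sum f G) (infsum f A) < e) (finite_subsets_at_top A)"
    using assms(2) by (rule tendstoD)
  then obtain S where "finite S" "S \<subseteq> A"
    "\<And>G. finite G \<and> S \<subseteq> G \<and> G \<subseteq> A \<Longrightarrow> dist (sum f G) (infsum f A) < e"
    unfolding eventually_finite_subsets_at_top by metis
  then show ?thesis
    using that[of S] by (simp add: dist_norm)
qed

lemma norm_sum_diff_le_card: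
  fixes f g :: "'a \<Rightarrow> 'b::real_normed_vector"
  assumes "\<And>a. a \<in> A \<Longrightarrow> norm (f a - g a) \<le> e"
  shows "norm (sum f A - sum g A) \<le> real (card A) * e"
proof -
  have "norm (sum f A - sum g A) \<le> (\<Sum>a\<in>A. norm (f a - g a))"
    unfolding sum_subtractf[symmetric] by (rule norm_sum)
  also have "\<dots> \<le> (\<Sum>a\<in>A. e)"
    using assms by (rule sum_mono)
  finally show ?thesis
    by simp
qed

lemma le_powr_inverse_if_powr_le:
  fixes x :: real
  assumes "0 < p" "0 \<le> x" "x powr p \<le> c"
  shows "x \<le> c powr (1 / p)"
proof -
  have "x = (x powr p) powr (1 / p)"
    using assms(1,2) by (simp add: powr_powr)
  also have "\<dots> \<le> c powr (1 / p)"
    using assms by (intro powr_mono2) auto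
  finally show ?thesis .
qed

lemma powr_le_mult_powr:
  fixes x \<eta> :: real
  assumes "0 \<le> x" "x \<le> \<eta>" "0 \<le> p" "p \<le> q"
  shows "x powr q \<le> \<eta> powr (q - p) * x powr p"
proof -
  have "x powr q = x powr (q - p) * x powr p"
    by (simp add: powr_add[symmetric])
  also have "\<dots> \<le> \<eta> powr (q - p) * x powr p"
    using assms by (intro mult_right_mono powr_mono2) auto
  finally show ?thesis .
qed

lemma exists_pos_mult_powr_le:
  fixes c e \<theta> :: real
  assumes "0 < \<theta>" "0 \<le> c" "0 < e"
  obtains x where "0 < x" "c * x powr \<theta> \<le> e"
proof
  let ?x = "(e / (c + 1)) powr (1 / \<theta>)"
  show "0 < ?x"
    using assms by simp
  have "?x powr \<theta> = e / (c + 1)"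
    using assms by (simp add: powr_powr)
  then have "c * ?x powr \<theta> = c * e / (c + 1)"
    by simp
  also have "\<dots> \<le> e"
    using assms by (simp add: pos_divide_le_eq algebra_simps)
  finally show "c * ?x powr \<theta> \<le> e" .
qed

section \<open>Paths of finite \<open>p\<close>-variation\<close>

locale pvar_path =
  fixes p T C :: real and X :: "real \<Rightarrow> 'v::banach"
  assumes p_pos: "0 < p" and T_pos: "0 < T"
    and nonoverlapping_bound:
      "\<And>I. nonoverlapping_intervals T I \<Longrightarrow> (\<Sum>(a, b)\<in>I. norm (X b - X a) powr p) \<le> C"
begin

lemma C_nonneg: "0 \<le> C"
  using nonoverlapping_bound[of "{}"] by (simp add: nonoverlapping_intervals_def)

lemma psum_bound: "is_partition T P \<Longrightarrow> psum T P (\<lambda>s t. norm (X t - X s) powr p) \<le> C"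
  unfolding psum_eq_sum_intervals by (intro nonoverlapping_bound partition_nonoverlapping_intervals)

lemma reflect: "pvar_path p T C (\<lambda>t. X (T - t))"
proof
  fix I assume I: "nonoverlapping_intervals T I"
  define \<rho> where "\<rho> = (\<lambda>(a, b). (T - b, T - a :: real))"
  have inj: "inj_on \<rho> I"
    unfolding \<rho>_def by (rule inj_onI) auto
  have "nonoverlapping_intervals T (\<rho> ` I)"
    using nonoverlapping_intervalsD[OF I] unfolding nonoverlapping_intervals_def \<rho>_def
    by (fastforce simp: split_beta)
  moreover have "(\<Sum>(a, b)\<in>\<rho> ` I. norm (X b - X a) powr p) = (\<Sum>(a, b)\<in>I. norm (X (T - b) - X (T - a)) powr p)"
    unfolding sum.reindex[OF inj] by (simp add: \<rho>_def split_beta norm_minus_commute)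
  ultimately show "(\<Sum>(a, b)\<in>I. norm (X (T - b) - X (T - a)) powr p) \<le> C"
    using nonoverlapping_bound by metis
qed (use p_pos T_pos in auto)

lemma card_large_increments_bound:
  assumes I: "nonoverlapping_intervals T I" and large: "\<And>a b. (a, b) \<in> I \<Longrightarrow> e \<le> norm (X b - X a)"
    and e: "0 < e"
  shows "real (card I) * e powr p \<le> C"
proof -
  have "real (card I) * e powr p = (\<Sum>(a, b)\<in>I. e powr p)"
    by (simp add: split_beta)
  also have "\<dots> \<le> (\<Sum>(a, b)\<in>I. norm (X b - X a) powr p)"
    using large e p_pos by (intro sum_mono) (auto intro: powr_mono2)
  also have "\<dots> \<le> C"
    by (rule nonoverlapping_bound[OF I])
  finally show ?thesis .
qed

lemma left_oscillation_small:
  assumes t: "0 < t" "t \<le> T" and e: "0 < e"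
  obtains b where "b < t" "\<And>u v. u \<in> {b<..<t} \<Longrightarrow> v \<in> {b<..<t} \<Longrightarrow> norm (X u - X v) < e"
proof (rule ccontr)
  assume no: "\<not> thesis"
  note small = that
  have large: "\<exists>u v. b < u \<and> u < v \<and> v < t \<and> e \<le> norm (X v - X u)" if b: "b < t" for b
  proof -
    obtain u v where uv: "u \<in> {b<..<t}" "v \<in> {b<..<t}" "e \<le> norm (X u - X v)"
      using small[OF b] no not_le by blast
    then have "u \<noteq> v"
      using e by auto
    then consider "u < v" | "v < u"
      by linarith
    then show ?thesis
    proof cases
      case 1
      then show ?thesis
        using uv by (intro exI[of _ u] exI[of _ v]) (auto simp: norm_minus_commute)
    next
      case 2
      then show ?thesis
        using uv by (intro exI[of _ v] exI[of _ u]) auto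
    qed
  qed
  obtain I where "nonoverlapping_intervals T I" "card I = nat \<lceil>C / e powr p\<rceil> + 1"
    "\<And>a b. (a, b) \<in> I \<Longrightarrow> e \<le> norm (X b - X a)"
    using exists_nonoverlapping_large_increments[OF large t] by blast
  then have "real (nat \<lceil>C / e powr p\<rceil> + 1) * e powr p \<le> C"
    using card_large_increments_bound e by metis
  moreover have "C / e powr p < real (nat \<lceil>C / e powr p\<rceil> + 1)"
    using real_nat_ceiling_ge[of "C / e powr p"] by simp
  then have "C < real (nat \<lceil>C / e powr p\<rceil> + 1) * e powr p"
    using e by (simp add: pos_divide_less_eq)
  ultimately show False
    by simp
qed

lemma left_limit:
  assumes "0 < t" "t \<le> T"
  shows "(X \<longlongrightarrow> lleft X t) (at_left t)"
proof -
  have "cauchy_filter (filtermap X (at_left t))"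
    unfolding cauchy_filter_metric_filtermap
  proof (intro allI impI)
    fix e :: real assume "0 < e"
    then obtain b where "b < t" and osc: "\<And>u v. u \<in> {b<..<t} \<Longrightarrow> v \<in> {b<..<t} \<Longrightarrow> norm (X u - X v) < e"
      using left_oscillation_small assms by metis
    then have "eventually (\<lambda>x. x \<in> {b<..<t}) (at_left t)"
      by (intro eventually_at_left_real)
    then show "\<exists>P. eventually P (at_left t) \<and> (\<forall>x y. P x \<and> P y \<longrightarrow> dist (X x) (X y) < e)"
      using osc by (intro exI[of _ "\<lambda>x. x \<in> {b<..<t}"]) (auto simp: dist_norm)
  qed
  moreover have "filtermap X (at_left t) \<noteq> bot"
    by (simp add: filtermap_bot_iff)
  ultimately obtain l where l: "(X \<longlongrightarrow> l) (at_left t)"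
    using complete_UNIV[unfolded complete_uniform, rule_format, of "filtermap X (at_left t)"]
    by (auto simp: filterlim_def)
  moreover have "lleft X t = l"
    unfolding lleft_def by (rule tendsto_Lim[OF trivial_limit_at_left_real l])
  ultimately show ?thesis
    by simp
qed

lemma right_limit:
  assumes "0 \<le> t" "t < T"
  shows "(X \<longlongrightarrow> lright X t) (at_right t)"
proof -
  interpret reflected: pvar_path p T C "\<lambda>s. X (T - s)"
    by (rule reflect)
  have "((\<lambda>s. X (T - s)) \<longlongrightarrow> lleft (\<lambda>s. X (T - s)) (T - t)) (at_left (T - t))"
    using assms by (intro reflected.left_limit) auto
  then show ?thesis
    unfolding lleft_reflect tendsto_at_left_reflect by simp
qed

lemma left_jumps_bound:
  assumes S: "finite S" "S \<subseteq> {0<..T}"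
  shows "(\<Sum>t\<in>S. norm (X t - lleft X t) powr p) \<le> C"
proof (rule tendsto_upperbound)
  show "((\<lambda>h. \<Sum>t\<in>S. norm (X t - X (t - h)) powr p) \<longlongrightarrow> (\<Sum>t\<in>S. norm (X t - lleft X t) powr p)) (at_right 0)"
  proof (intro tendsto_sum tendsto_powr2 tendsto_norm tendsto_diff tendsto_const)
    fix t assume "t \<in> S"
    then show "((\<lambda>h. X (t - h)) \<longlongrightarrow> lleft X t) (at_right 0)"
      using left_limit S(2) tendsto_at_right_reflect[of X t _ 0] by auto
  qed (use p_pos in auto)
  show "eventually (\<lambda>h. (\<Sum>t\<in>S. norm (X t - X (t - h)) powr p) \<le> C) (at_right 0)"
    using eventually_nonoverlapping_left_shifts[OF S]
  proof eventually_elim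
    case (elim h)
    have "inj_on (\<lambda>t. (t - h, t)) S"
      by (rule inj_onI) auto
    then have "(\<Sum>t\<in>S. norm (X t - X (t - h)) powr p) = (\<Sum>(a, b)\<in>(\<lambda>t. (t - h, t)) ` S. norm (X b - X a) powr p)"
      by (simp add: sum.reindex)
    also have "\<dots> \<le> C"
      by (rule nonoverlapping_bound[OF elim])
    finally show ?case .
  qed
qed simp

lemma right_jumps_bound:
  assumes S: "finite S" "S \<subseteq> {0..<T}"
  shows "(\<Sum>t\<in>S. norm (lright X t - X t) powr p) \<le> C"
proof -
  interpret reflected: pvar_path p T C "\<lambda>s. X (T - s)"
    by (rule reflect)
  have "(\<Sum>t\<in>S. norm (lright X t - X t) powr p)
      = (\<Sum>s\<in>(\<lambda>t. T - t) ` S. norm (X (T - s) - lleft (\<lambda>s. X (T - s)) s) powr p)"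
    by (simp add: sum.reindex inj_on_def lleft_reflect norm_minus_commute)
  also have "\<dots> \<le> C"
    using S by (intro reflected.left_jumps_bound) auto
  finally show ?thesis .
qed

lemma left_jump_le: "0 < t \<Longrightarrow> t \<le> T \<Longrightarrow> norm (X t - lleft X t) \<le> C powr (1 / p)"
  using left_jumps_bound[of "{t}"] p_pos by (intro le_powr_inverse_if_powr_le) auto

lemma right_jump_le: "0 \<le> t \<Longrightarrow> t < T \<Longrightarrow> norm (lright X t - X t) \<le> C powr (1 / p)"
  using right_jumps_bound[of "{t}"] p_pos by (intro le_powr_inverse_if_powr_le) auto

lemma finite_large_left_jumps: "0 < d \<Longrightarrow> finite {t \<in> {0<..T}. d \<le> norm (X t - lleft X t)}"
  using p_pos left_jumps_bound by (intro finite_if_sum_powr_bounded)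

lemma finite_large_right_jumps: "0 < d \<Longrightarrow> finite {t \<in> {0..<T}. d \<le> norm (lright X t - X t)}"
  using p_pos right_jumps_bound by (intro finite_if_sum_powr_bounded)

lemma one_sided_limits_gauge:
  assumes d: "0 < d"
  obtains \<gamma> where "\<And>x. 0 < \<gamma> x"
    "\<And>x u. 0 < x \<Longrightarrow> x \<le> T \<Longrightarrow> u \<in> {x - \<gamma> x<..<x} \<Longrightarrow> norm (X u - lleft X x) < d"
    "\<And>x u. 0 \<le> x \<Longrightarrow> x < T \<Longrightarrow> u \<in> {x<..<x + \<gamma> x} \<Longrightarrow> norm (X u - lright X x) < d"
proof -
  have "\<forall>x. \<exists>g>0. (0 < x \<and> x \<le> T \<longrightarrow> (\<forall>u\<in>{x - g<..<x}. norm (X u - lleft X x) < d)) \<and>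
      (0 \<le> x \<and> x < T \<longrightarrow> (\<forall>u\<in>{x<..<x + g}. norm (X u - lright X x) < d))"
  proof
    fix x
    obtain g1 where g1: "0 < g1" "0 < x \<and> x \<le> T \<longrightarrow> (\<forall>u\<in>{x - g1<..<x}. norm (X u - lleft X x) < d)"
    proof (cases "0 < x \<and> x \<le> T")
      case True
      then have "eventually (\<lambda>u. dist (X u) (lleft X x) < d) (at_left x)"
        using tendstoD[OF left_limit d] by blast
      then obtain b where "b < x" "\<And>u. b < u \<Longrightarrow> u < x \<Longrightarrow> dist (X u) (lleft X x) < d"
        unfolding eventually_at_left_field by blast
      then show ?thesis
        by (intro that[of "x - b"]) (auto simp: dist_norm)
    qed (use that[of 1] in auto)
    obtain g2 where g2: "0 < g2" "0 \<le> x \<and> x < T \<longrightarrow> (\<forall>u\<in>{x<..<x + g2}. norm (X u - lright X x) < d)"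
    proof (cases "0 \<le> x \<and> x < T")
      case True
      then have "eventually (\<lambda>u. dist (X u) (lright X x) < d) (at_right x)"
        using tendstoD[OF right_limit d] by blast
      then obtain b where "x < b" "\<And>u. x < u \<Longrightarrow> u < b \<Longrightarrow> dist (X u) (lright X x) < d"
        unfolding eventually_at_right_field by blast
      then show ?thesis
        by (intro that[of "b - x"]) (auto simp: dist_norm)
    qed (use that[of 1] in auto)
    show "\<exists>g>0. (0 < x \<and> x \<le> T \<longrightarrow> (\<forall>u\<in>{x - g<..<x}. norm (X u - lleft X x) < d)) \<and>
        (0 \<le> x \<and> x < T \<longrightarrow> (\<forall>u\<in>{x<..<x + g}. norm (X u - lright X x) < d))"
      using g1 g2 by (intro exI[of _ "min g1 g2"]) auto
  qed
  from choice[OF this] obtain \<gamma> where "\<forall>x. 0 < \<gamma> x \<and>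
      (0 < x \<and> x \<le> T \<longrightarrow> (\<forall>u\<in>{x - \<gamma> x<..<x}. norm (X u - lleft X x) < d)) \<and>
      (0 \<le> x \<and> x < T \<longrightarrow> (\<forall>u\<in>{x<..<x + \<gamma> x}. norm (X u - lright X x) < d))"
    by blast
  then show ?thesis
    by (intro that[of \<gamma>]) auto
qed

lemma oscillation_gauge:
  assumes d: "0 < d"
  obtains \<gamma> where "\<And>x. 0 < \<gamma> x"
    "\<And>x u v w w'. x \<in> {0..T} \<Longrightarrow> x \<le> u \<or> v \<le> x \<Longrightarrow> {u..v} \<subseteq> ball x (\<gamma> x) \<Longrightarrow> 0 \<le> u \<Longrightarrow> v \<le> T \<Longrightarrow>
      w \<in> {u<..<v} \<Longrightarrow> w' \<in> {u<..<v} \<Longrightarrow> norm (X w - X w') < d"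
proof -
  obtain \<gamma> where \<gamma>: "\<And>x. 0 < \<gamma> x"
    "\<And>x u. 0 < x \<Longrightarrow> x \<le> T \<Longrightarrow> u \<in> {x - \<gamma> x<..<x} \<Longrightarrow> norm (X u - lleft X x) < d / 2"
    "\<And>x u. 0 \<le> x \<Longrightarrow> x < T \<Longrightarrow> u \<in> {x<..<x + \<gamma> x} \<Longrightarrow> norm (X u - lright X x) < d / 2"
    using one_sided_limits_gauge[of "d / 2"] d by auto
  have "norm (X w - X w') < d"
    if x: "x \<in> {0..T}" and side: "x \<le> u \<or> v \<le> x" and ball: "{u..v} \<subseteq> ball x (\<gamma> x)"
      and uv: "0 \<le> u" "v \<le> T" "w \<in> {u<..<v}" "w' \<in> {u<..<v}" for x u v w w'
  proof -
    have "u \<le> v"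
      using uv(3) by auto
    then have "u \<in> ball x (\<gamma> x)" "v \<in> ball x (\<gamma> x)"
      using ball by auto
    then have near: "x - \<gamma> x < u" "v < x + \<gamma> x"
      by (auto simp: dist_real_def)
    have close: "norm (X w - X w') < d" if "\<And>y. y \<in> {u<..<v} \<Longrightarrow> norm (X y - l) < d / 2" for l
      using that[of w] that[of w'] uv(3,4) dist_triangle2[of "X w" "X w'" l] by (simp add: dist_norm)
    from side show ?thesis
    proof
      assume "x \<le> u"
      then have "x < T"
        using uv by auto
      show ?thesis
        by (rule close, rule \<gamma>(3)) (use x \<open>x \<le> u\<close> \<open>x < T\<close> near in auto)
    next
      assume "v \<le> x"
      then have "0 < x"
        using uv by auto
      show ?thesis
        by (rule close, rule \<gamma>(2)) (use x \<open>v \<le> x\<close> \<open>0 < x\<close> near in auto)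
    qed
  qed
  with \<gamma>(1) show ?thesis
    by (rule that)
qed

text \<open>Cousin's lemma for the gauge above: each open interval free of points of the partition lies
  between the endpoints of one interval of the tagged division, on one side of its tag.\<close>

lemma regulated_partition:
  assumes d: "0 < d"
  obtains P1 where "is_partition T P1"
    "\<And>u v w w'. \<forall>z\<in>P1. z \<le> u \<or> v \<le> z \<Longrightarrow> 0 \<le> u \<Longrightarrow> v \<le> T \<Longrightarrow>
      w \<in> {u<..<v} \<Longrightarrow> w' \<in> {u<..<v} \<Longrightarrow> norm (X w - X w') < d"
proof -
  obtain \<gamma> where \<gamma>: "\<And>x. 0 < \<gamma> x" and osc: "\<And>x u v w w'. x \<in> {0..T} \<Longrightarrow> x \<le> u \<or> v \<le> x \<Longrightarrow>
      {u..v} \<subseteq> ball x (\<gamma> x) \<Longrightarrow> 0 \<le> u \<Longrightarrow> v \<le> T \<Longrightarrow> w \<in> {u<..<v} \<Longrightarrow> w' \<in> {u<..<v} \<Longrightarrow>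
      norm (X w - X w') < d"
    using oscillation_gauge[OF d] by blast
  obtain \<D> where \<D>: "\<D> tagged_division_of {0..T}" "(\<lambda>x. ball x (\<gamma> x)) fine \<D>"
    using fine_division_exists_real[OF gauge_ball_dependent] \<gamma> by blast
  note tag = tagged_division_of_real_intervalD[OF \<D>(1)]
  define P1 where "P1 = {0, T} \<union> (\<Union>(x, K)\<in>\<D>. {x, Inf K, Sup K})"
  have "is_partition T P1"
    unfolding P1_def using tagged_division_points_partition[OF \<D>(1)] T_pos by simp
  moreover have "norm (X w - X w') < d"
    if P1: "\<forall>z\<in>P1. z \<le> u \<or> v \<le> z" and uv: "0 \<le> u" "v \<le> T" "w \<in> {u<..<v}" "w' \<in> {u<..<v}"
    for u v w w'
  proof -
    have "w \<in> \<Union>{K. \<exists>x. (x, K) \<in> \<D>}"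
      unfolding tagged_division_ofD(6)[OF \<D>(1)] using uv by simp
    then obtain x K where xK: "(x, K) \<in> \<D>" "w \<in> K"
      by blast
    have "x \<in> P1" "Inf K \<in> P1" "Sup K \<in> P1"
      unfolding P1_def using xK(1) by blast+
    then have "x \<le> u \<or> v \<le> x" "Inf K \<le> u \<or> v \<le> Inf K" "Sup K \<le> u \<or> v \<le> Sup K"
      using P1 by blast+
    moreover have "Inf K \<le> w" "w \<le> Sup K"
      using xK(2) tag(3)[OF xK(1)] by auto
    ultimately have "x \<le> u \<or> v \<le> x" "Inf K \<le> u" "v \<le> Sup K"
      using uv(3) by auto
    then have "x \<le> u \<or> v \<le> x" "{u..v} \<subseteq> K"
      using tag(3)[OF xK(1)] by auto
    moreover have "K \<subseteq> ball x (\<gamma> x)"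
      using \<D>(2) xK(1) unfolding fine_def by blast
    ultimately show ?thesis
      using osc[of x u v w w'] tag(1,2)[OF xK(1)] uv by blast
  qed
  ultimately show ?thesis
    by (rule that)
qed

lemma increment_le_of_small_oscillation:
  assumes st: "0 \<le> s" "s < t" "t \<le> T"
    and osc: "\<And>w w'. w \<in> {s<..<t} \<Longrightarrow> w' \<in> {s<..<t} \<Longrightarrow> norm (X w - X w') < d"
    and jumps: "norm (X t - lleft X t) < d" "norm (lright X s - X s) < d"
  shows "norm (X t - X s) \<le> 3 * d"
proof -
  have near_left: "norm (X w - lleft X t) \<le> d" if "w \<in> {s<..<t}" for w
  proof (rule Lim_norm_ubound[OF trivial_limit_at_left_real])
    show "((\<lambda>w'. X w - X w') \<longlongrightarrow> X w - lleft X t) (at_left t)"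
      using st by (intro tendsto_intros left_limit) auto
    show "eventually (\<lambda>w'. norm (X w - X w') \<le> d) (at_left t)"
      using eventually_at_left_real[OF st(2)] by eventually_elim (use osc that in \<open>auto intro: less_imp_le\<close>)
  qed
  have "norm (lright X s - lleft X t) \<le> d"
  proof (rule Lim_norm_ubound[OF trivial_limit_at_right_real])
    show "((\<lambda>w. X w - lleft X t) \<longlongrightarrow> lright X s - lleft X t) (at_right s)"
      using st by (intro tendsto_intros right_limit) auto
    show "eventually (\<lambda>w. norm (X w - lleft X t) \<le> d) (at_right s)"
      using eventually_at_right_real[OF st(2)] by eventually_elim (use near_left in auto)
  qed
  then have "norm (X t - X s) \<le> norm (X t - lleft X t) + norm (lleft X t - lright X s) + norm (lright X s - X s)"
    using norm_triangle_ineq[of "X t - lleft X t" "lleft X t - lright X s"]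
      norm_triangle_ineq[of "X t - lleft X t + (lleft X t - lright X s)" "lright X s - X s"]
    by (simp add: algebra_simps)
  then show ?thesis
    using jumps \<open>norm (lright X s - lleft X t) \<le> d\<close> by (simp add: norm_minus_commute)
qed

lemma increment_le_in_refinement:
  assumes osc: "\<And>u v w w'. \<forall>z\<in>P1. z \<le> u \<or> v \<le> z \<Longrightarrow> 0 \<le> u \<Longrightarrow> v \<le> T \<Longrightarrow>
      w \<in> {u<..<v} \<Longrightarrow> w' \<in> {u<..<v} \<Longrightarrow> norm (X w - X w') < d"
    and P: "is_partition T P" "P1 \<subseteq> P" and s: "s \<in> P - {T}"
    and jumps: "norm (X (pnext P s) - lleft X (pnext P s)) < d" "norm (lright X s - X s) < d"
  shows "norm (X (pnext P s) - X s) \<le> 3 * d"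
proof (rule increment_le_of_small_oscillation[OF _ _ _ _ jumps])
  note next_s = partition_pnext[OF P(1) s]
  show "0 \<le> s" "s < pnext P s" "pnext P s \<le> T"
    using next_s by auto
  have "z \<le> s \<or> pnext P s \<le> z" if "z \<in> P1" for z
    using that next_s(3)[of z] P(2) by force
  then show "norm (X w - X w') < d" if "w \<in> {s<..<pnext P s}" "w' \<in> {s<..<pnext P s}" for w w'
    using osc that next_s by blast
qed

end

lemma pvar_path_if_finite_pvar:
  assumes "finite_pvar p T X" "0 < p" "0 < T"
  obtains C where "pvar_path p T C X"
proof -
  obtain C where C: "\<And>P. is_partition T P \<Longrightarrow> psum T P (\<lambda>s t. norm (X t - X s) powr p) \<le> C"
    using assms(1) unfolding finite_pvar_def by blast
  have "(\<Sum>(a, b)\<in>I. norm (X b - X a) powr p) \<le> C" if I: "nonoverlapping_intervals T I" for I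
  proof -
    have "(\<Sum>(a, b)\<in>I. norm (X b - X a) powr p) \<le> psum T ({0, T} \<union> fst ` I \<union> snd ` I) (\<lambda>s t. norm (X t - X s) powr p)"
      using assms(3) by (intro nonoverlapping_sum_le_psum[OF I]) auto
    also have "\<dots> \<le> C"
      using assms(3) by (intro C nonoverlapping_intervals_endpoints(1)[OF I]) auto
    finally show ?thesis .
  qed
  with assms(2,3) have "pvar_path p T C X"
    by unfold_locales auto
  then show ?thesis
    by (rule that)
qed

section \<open>Remainder sums along a path\<close>

locale pvar_remainder = pvar_path p T C X for p T C and X :: "real \<Rightarrow> 'v::banach" +
  fixes R :: "'v \<Rightarrow> 'v \<Rightarrow> 'u::banach" and K q :: real
  assumes p_less_q: "p < q" and K_nonneg: "0 \<le> K"
    and remainder_bound: "\<And>x y. norm (R x y) \<le> K * norm (y - x) powr q"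
    and remainder_isCont_fst: "\<And>x y. isCont (\<lambda>x. R x y) x"
    and remainder_isCont_snd: "\<And>x y. isCont (R x) y"
begin

lemma remainder_diag: "R x x = 0"
  using remainder_bound[of x x] by simp

lemma remainder_le_powr_p:
  assumes "norm (y - x) \<le> \<eta>"
  shows "norm (R x y) \<le> K * \<eta> powr (q - p) * norm (y - x) powr p"
proof -
  have "norm (R x y) \<le> K * norm (y - x) powr q"
    by (rule remainder_bound)
  also have "\<dots> \<le> K * (\<eta> powr (q - p) * norm (y - x) powr p)"
    using assms p_pos p_less_q K_nonneg by (intro mult_left_mono powr_le_mult_powr) auto
  finally show ?thesis
    by (simp add: mult.assoc)
qed

lemma left_jumps_summable: "(\<lambda>t. norm (R (lleft X t) (X t))) summable_on {0<..T}"
proof (rule summable_on_norm_if_dominated)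
  fix t :: real assume "t \<in> {0<..T}"
  then show "norm (R (lleft X t) (X t)) \<le> K * (C powr (1 / p)) powr (q - p) * norm (X t - lleft X t) powr p"
    using left_jump_le by (intro remainder_le_powr_p) auto
qed (use K_nonneg left_jumps_bound in auto)

lemma right_jumps_summable: "(\<lambda>t. norm (R (X t) (lright X t))) summable_on {0..<T}"
proof (rule summable_on_norm_if_dominated)
  fix t :: real assume "t \<in> {0..<T}"
  then show "norm (R (X t) (lright X t)) \<le> K * (C powr (1 / p)) powr (q - p) * norm (lright X t - X t) powr p"
    using right_jump_le by (intro remainder_le_powr_p) auto
qed (use K_nonneg right_jumps_bound in auto)

lemma remainder_sum_small_increments:
  assumes P: "is_partition T P" and E: "E \<subseteq> P - {T}"
    and small: "\<And>s. s \<in> E \<Longrightarrow> norm (X (pnext P s) - X s) \<le> \<eta>"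
  shows "norm (\<Sum>s\<in>E. R (X s) (X (pnext P s))) \<le> K * \<eta> powr (q - p) * C"
proof -
  have fin: "finite (P - {T})"
    using P unfolding is_partition_def by simp
  have "norm (\<Sum>s\<in>E. R (X s) (X (pnext P s))) \<le> (\<Sum>s\<in>E. K * \<eta> powr (q - p) * norm (X (pnext P s) - X s) powr p)"
    using small by (intro order_trans[OF norm_sum] sum_mono remainder_le_powr_p)
  also have "\<dots> \<le> K * \<eta> powr (q - p) * psum T P (\<lambda>s t. norm (X t - X s) powr p)"
    unfolding psum_def sum_distrib_left[symmetric] using K_nonneg E fin
    by (intro mult_left_mono sum_mono2) auto
  also have "\<dots> \<le> K * \<eta> powr (q - p) * C"
    using K_nonneg by (intro mult_left_mono psum_bound[OF P]) auto
  finally show ?thesis .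
qed

lemma eventually_remainder_near_right_jump:
  assumes "0 \<le> a" "a < T" "0 < e"
  shows "eventually (\<lambda>\<eta>. \<forall>t\<in>{a<..a + \<eta>}. norm (R (X a) (X t) - R (X a) (lright X a)) < e) (at_right 0)"
proof -
  have "((\<lambda>t. R (X a) (X t)) \<longlongrightarrow> R (X a) (lright X a)) (at_right a)"
    using assms by (intro isCont_tendsto_compose[OF remainder_isCont_snd] right_limit)
  from tendstoD[OF this assms(3)]
  obtain b where b: "a < b" "\<And>t. a < t \<Longrightarrow> t < b \<Longrightarrow> norm (R (X a) (X t) - R (X a) (lright X a)) < e"
    unfolding eventually_at_right_field dist_norm by blast
  have "eventually (\<lambda>\<eta>. \<eta> \<in> {0<..<b - a}) (at_right 0)"
    using b(1) by (intro eventually_at_right_real) simp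
  then show ?thesis
    by eventually_elim (use b in auto)
qed

lemma eventually_remainder_near_left_jump:
  assumes "0 < a" "a \<le> T" "0 < e"
  shows "eventually (\<lambda>\<eta>. \<forall>s\<in>{a - \<eta>..<a}. norm (R (X s) (X a) - R (lleft X a) (X a)) < e) (at_right 0)"
proof -
  have "((\<lambda>s. R (X s) (X a)) \<longlongrightarrow> R (lleft X a) (X a)) (at_left a)"
    using assms by (intro isCont_tendsto_compose[OF remainder_isCont_fst] left_limit)
  from tendstoD[OF this assms(3)]
  obtain b where b: "b < a" "\<And>s. b < s \<Longrightarrow> s < a \<Longrightarrow> norm (R (X s) (X a) - R (lleft X a) (X a)) < e"
    unfolding eventually_at_left_field dist_norm by blast
  have "eventually (\<lambda>\<eta>. \<eta> \<in> {0<..<a - b}) (at_right 0)"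
    using b(1) by (intro eventually_at_right_real) simp
  then show ?thesis
    by eventually_elim (use b in auto)
qed

context
  fixes P S0 :: "real set" and \<eta> :: real
  assumes P: "is_partition T P" and S0_sub: "S0 \<subseteq> P" and \<eta>: "0 < \<eta>"
    and gap: "\<And>a b. a \<in> S0 \<Longrightarrow> b \<in> S0 \<Longrightarrow> a < b \<Longrightarrow> 2 * \<eta> < b - a"
    and plus_in: "\<And>a. a \<in> S0 \<Longrightarrow> a < T \<Longrightarrow> a + \<eta> \<in> P"
    and minus_in: "\<And>a. a \<in> S0 \<Longrightarrow> 0 < a \<Longrightarrow> a - \<eta> \<in> P"
begin

lemma pnext_after_marked:
  assumes "a \<in> S0" "a < T"
  shows "pnext P a \<in> {a<..a + \<eta>}" "pnext P a \<notin> S0"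
proof -
  have "a \<in> P - {T}"
    using assms S0_sub by auto
  then show "pnext P a \<in> {a<..a + \<eta>}"
    using partition_pnext(2,3)[OF P] plus_in[OF assms] \<eta> by auto
  then show "pnext P a \<notin> S0"
    using gap[OF assms(1)] \<eta> by force
qed

lemma pnext_onto_marked:
  assumes "s \<in> P - {T}" "pnext P s \<in> S0"
  shows "s \<in> {pnext P s - \<eta>..<pnext P s}" "0 < pnext P s"
proof -
  show "0 < pnext P s"
    using partition_pnext(2,4)[OF P assms(1)] by linarith
  then have "pnext P s - \<eta> \<in> P"
    using minus_in[OF assms(2)] by blast
  then have "\<not> s < pnext P s - \<eta>"
    using partition_pnext(3)[OF P assms(1)] \<eta> by force
  then show "s \<in> {pnext P s - \<eta>..<pnext P s}"
    using partition_pnext(2)[OF P assms(1)] by auto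
qed

lemma psum_split_marked:
  "psum T P f = (\<Sum>a\<in>S0 - {T}. f a (pnext P a)) + (\<Sum>s\<in>{s \<in> P - {T}. pnext P s \<in> S0}. f s (pnext P s))
     + (\<Sum>s\<in>{s \<in> P - {T}. s \<notin> S0 \<and> pnext P s \<notin> S0}. f s (pnext P s))"
proof -
  define A B E where "A = S0 - {T}" and "B = {s \<in> P - {T}. pnext P s \<in> S0}"
    and "E = {s \<in> P - {T}. s \<notin> S0 \<and> pnext P s \<notin> S0}"
  define g where "g s = f s (pnext P s)" for s
  have fin: "finite A" "finite B" "finite E"
    using P S0_sub unfolding is_partition_def A_def B_def E_def by (auto intro: finite_subset)
  have "pnext P a \<notin> S0" if "a \<in> A" for a
  proof -
    have "a < T"
      using that S0_sub P unfolding A_def is_partition_def by fastforce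
    then show ?thesis
      using pnext_after_marked(2) that unfolding A_def by blast
  qed
  then have "A \<inter> B = {}"
    unfolding B_def by blast
  have "(A \<union> B) \<inter> E = {}"
    unfolding A_def B_def E_def by blast
  have "P - {T} = (A \<union> B) \<union> E"
    using S0_sub unfolding A_def B_def E_def by blast
  then have "psum T P f = sum g ((A \<union> B) \<union> E)"
    unfolding psum_def g_def by simp
  also have "\<dots> = sum g (A \<union> B) + sum g E"
    using fin \<open>(A \<union> B) \<inter> E = {}\<close> by (intro sum.union_disjoint) auto
  also have "sum g (A \<union> B) = sum g A + sum g B"
    using fin \<open>A \<inter> B = {}\<close> by (intro sum.union_disjoint) auto
  finally show ?thesis
    unfolding A_def B_def E_def g_def .
qed

lemma marked_right_terms:
  assumes tol: "0 \<le> tol"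
    and right: "\<And>a t. a \<in> S0 \<Longrightarrow> a < T \<Longrightarrow> t \<in> {a<..a + \<eta>} \<Longrightarrow>
      norm (R (X a) (X t) - R (X a) (lright X a)) \<le> tol"
  shows "norm ((\<Sum>a\<in>S0 - {T}. R (X a) (X (pnext P a))) - (\<Sum>a\<in>S0 - {T}. R (X a) (lright X a)))
    \<le> real (card S0) * tol"
proof -
  have "finite S0"
    using P S0_sub finite_subset unfolding is_partition_def by blast
  have "norm ((\<Sum>a\<in>S0 - {T}. R (X a) (X (pnext P a))) - (\<Sum>a\<in>S0 - {T}. R (X a) (lright X a)))
      \<le> real (card (S0 - {T})) * tol"
    using right pnext_after_marked(1) S0_sub P
    by (intro norm_sum_diff_le_card) (auto simp: is_partition_def)
  also have "\<dots> \<le> real (card S0) * tol"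
    using \<open>finite S0\<close> tol by (intro mult_right_mono) (auto simp: card_mono)
  finally show ?thesis .
qed

lemma marked_left_terms:
  assumes tol: "0 \<le> tol"
    and left: "\<And>a s. a \<in> S0 \<Longrightarrow> 0 < a \<Longrightarrow> s \<in> {a - \<eta>..<a} \<Longrightarrow>
      norm (R (X s) (X a) - R (lleft X a) (X a)) \<le> tol"
  shows "norm ((\<Sum>s\<in>{s \<in> P - {T}. pnext P s \<in> S0}. R (X s) (X (pnext P s))) - (\<Sum>a\<in>S0 - {0}. R (lleft X a) (X a)))
    \<le> real (card S0) * tol"
proof -
  define B where "B = {s \<in> P - {T}. pnext P s \<in> S0}"
  have "finite S0"
    using P S0_sub finite_subset unfolding is_partition_def by blast
  have bij: "bij_betw (pnext P) B (S0 - {0})"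
    unfolding B_def by (rule partition_pnext_bij_onto[OF P S0_sub])
  have "(\<Sum>a\<in>S0 - {0}. R (lleft X a) (X a)) = (\<Sum>s\<in>B. R (lleft X (pnext P s)) (X (pnext P s)))"
    using sum.reindex_bij_betw[OF bij, of "\<lambda>a. R (lleft X a) (X a)"] by simp
  moreover have "norm ((\<Sum>s\<in>B. R (X s) (X (pnext P s))) - (\<Sum>s\<in>B. R (lleft X (pnext P s)) (X (pnext P s))))
      \<le> real (card B) * tol"
    using left pnext_onto_marked unfolding B_def by (intro norm_sum_diff_le_card) auto
  moreover have "card B = card (S0 - {0})"
    using bij_betw_same_card[OF bij] .
  then have "real (card B) * tol \<le> real (card S0) * tol"
    using \<open>finite S0\<close> tol by (intro mult_right_mono) (auto simp: card_mono)
  ultimately show ?thesis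
    unfolding B_def by simp
qed

lemma remainder_sum_near_jumps:
  assumes tol: "0 \<le> tol"
    and right: "\<And>a t. a \<in> S0 \<Longrightarrow> a < T \<Longrightarrow> t \<in> {a<..a + \<eta>} \<Longrightarrow>
      norm (R (X a) (X t) - R (X a) (lright X a)) \<le> tol"
    and left: "\<And>a s. a \<in> S0 \<Longrightarrow> 0 < a \<Longrightarrow> s \<in> {a - \<eta>..<a} \<Longrightarrow>
      norm (R (X s) (X a) - R (lleft X a) (X a)) \<le> tol"
    and small: "\<And>s. s \<in> P - {T} \<Longrightarrow> s \<notin> S0 \<Longrightarrow> pnext P s \<notin> S0 \<Longrightarrow> norm (X (pnext P s) - X s) \<le> \<eta>0"
  shows "norm (psum T P (\<lambda>s t. R (X s) (X t))
      - ((\<Sum>a\<in>S0 - {T}. R (X a) (lright X a)) + (\<Sum>a\<in>S0 - {0}. R (lleft X a) (X a))))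
    \<le> 2 * real (card S0) * tol + K * \<eta>0 powr (q - p) * C"
proof -
  define B where "B = {s \<in> P - {T}. pnext P s \<in> S0}"
  define E where "E = {s \<in> P - {T}. s \<notin> S0 \<and> pnext P s \<notin> S0}"
  have E_est: "norm (\<Sum>s\<in>E. R (X s) (X (pnext P s))) \<le> K * \<eta>0 powr (q - p) * C"
    using small unfolding E_def by (intro remainder_sum_small_increments[OF P]) auto
  have "psum T P (\<lambda>s t. R (X s) (X t)) - ((\<Sum>a\<in>S0 - {T}. R (X a) (lright X a)) + (\<Sum>a\<in>S0 - {0}. R (lleft X a) (X a)))
      = ((\<Sum>a\<in>S0 - {T}. R (X a) (X (pnext P a))) - (\<Sum>a\<in>S0 - {T}. R (X a) (lright X a)))
        + ((\<Sum>s\<in>B. R (X s) (X (pnext P s))) - (\<Sum>a\<in>S0 - {0}. R (lleft X a) (X a)))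
        + (\<Sum>s\<in>E. R (X s) (X (pnext P s)))"
    unfolding psum_split_marked B_def E_def by (simp add: algebra_simps)
  also have "norm \<dots> \<le> real (card S0) * tol + real (card S0) * tol + K * \<eta>0 powr (q - p) * C"
    using marked_right_terms[OF tol right] marked_left_terms[OF tol left] E_est unfolding B_def
    by (intro norm_triangle_le add_mono norm_triangle_ineq) auto
  finally show ?thesis
    by (simp add: mult_ac)
qed

end

lemma exists_jump_scale:
  assumes S0: "finite S0" "S0 \<subseteq> {0..T}" and tol: "0 < tol"
  obtains \<eta> where "0 < \<eta>" "\<And>a b. a \<in> S0 \<Longrightarrow> b \<in> S0 \<Longrightarrow> a < b \<Longrightarrow> 2 * \<eta> < b - a"
    "\<And>a t. a \<in> S0 \<Longrightarrow> a < T \<Longrightarrow> t \<in> {a<..a + \<eta>} \<Longrightarrow> norm (R (X a) (X t) - R (X a) (lright X a)) \<le> tol"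
    "\<And>a s. a \<in> S0 \<Longrightarrow> 0 < a \<Longrightarrow> s \<in> {a - \<eta>..<a} \<Longrightarrow> norm (R (X s) (X a) - R (lleft X a) (X a)) \<le> tol"
proof -
  have gap: "eventually (\<lambda>\<eta>. a < b \<longrightarrow> 2 * \<eta> < b - a) (at_right 0)" for a b :: real
  proof (cases "a < b")
    case True
    then have "eventually (\<lambda>\<eta>. \<eta> \<in> {0<..<(b - a) / 2}) (at_right 0)"
      by (intro eventually_at_right_real) simp
    then show ?thesis
      by eventually_elim auto
  qed simp
  have right: "eventually (\<lambda>\<eta>. a < T \<longrightarrow> (\<forall>t\<in>{a<..a + \<eta>}. norm (R (X a) (X t) - R (X a) (lright X a)) < tol))
      (at_right 0)" if "a \<in> S0" for a
    using eventually_remainder_near_right_jump[of a tol] that S0(2) tol by (cases "a < T") auto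
  have left: "eventually (\<lambda>\<eta>. 0 < a \<longrightarrow> (\<forall>s\<in>{a - \<eta>..<a}. norm (R (X s) (X a) - R (lleft X a) (X a)) < tol))
      (at_right 0)" if "a \<in> S0" for a
    using eventually_remainder_near_left_jump[of a tol] that S0(2) tol by (cases "0 < a") auto
  have "eventually (\<lambda>\<eta>. 0 < \<eta> \<and> (\<forall>a\<in>S0. \<forall>b\<in>S0. a < b \<longrightarrow> 2 * \<eta> < b - a)
      \<and> (\<forall>a\<in>S0. a < T \<longrightarrow> (\<forall>t\<in>{a<..a + \<eta>}. norm (R (X a) (X t) - R (X a) (lright X a)) < tol))
      \<and> (\<forall>a\<in>S0. 0 < a \<longrightarrow> (\<forall>s\<in>{a - \<eta>..<a}. norm (R (X s) (X a) - R (lleft X a) (X a)) < tol))) (at_right 0)"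
    using S0(1) gap right left eventually_at_right_less[of 0]
    by (simp add: eventually_conj_iff eventually_ball_finite_distrib)
  then obtain \<eta> where \<eta>: "0 < \<eta>" "\<forall>a\<in>S0. \<forall>b\<in>S0. a < b \<longrightarrow> 2 * \<eta> < b - a"
    "\<forall>a\<in>S0. a < T \<longrightarrow> (\<forall>t\<in>{a<..a + \<eta>}. norm (R (X a) (X t) - R (X a) (lright X a)) < tol)"
    "\<forall>a\<in>S0. 0 < a \<longrightarrow> (\<forall>s\<in>{a - \<eta>..<a}. norm (R (X s) (X a) - R (lleft X a) (X a)) < tol)"
    using eventually_happens'[OF trivial_limit_at_right_real] by blast
  show ?thesis
  proof (rule that[of \<eta>])
    show "0 < \<eta>"
      by (fact \<eta>(1))
    show "2 * \<eta> < b - a" if "a \<in> S0" "b \<in> S0" "a < b" for a b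
      using \<eta>(2) that by blast
    show "norm (R (X a) (X t) - R (X a) (lright X a)) \<le> tol" if "a \<in> S0" "a < T" "t \<in> {a<..a + \<eta>}" for a t
      using \<eta>(3) that less_imp_le by blast
    show "norm (R (X s) (X a) - R (lleft X a) (X a)) \<le> tol" if "a \<in> S0" "0 < a" "s \<in> {a - \<eta>..<a}" for a s
      using \<eta>(4) that less_imp_le by blast
  qed
qed

text \<open>Once every jump of size at least \<open>\<delta>\<close> is marked, refining the partition isolates the marked
  points in intervals of length at most \<open>\<eta>\<close> and leaves every other partition interval with an
  increment of at most \<open>3 \<delta>\<close>.\<close>

lemma refinement_estimate:
  assumes \<delta>: "0 < \<delta>" and tol: "0 < tol"
    and S0: "finite S0" "S0 \<subseteq> {0..T}" "0 \<in> S0" "T \<in> S0"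
    and big_left: "\<And>t. t \<in> {0<..T} \<Longrightarrow> \<delta> \<le> norm (X t - lleft X t) \<Longrightarrow> t \<in> S0"
    and big_right: "\<And>t. t \<in> {0..<T} \<Longrightarrow> \<delta> \<le> norm (lright X t - X t) \<Longrightarrow> t \<in> S0"
  obtains Pe where "is_partition T Pe"
    "\<And>P. is_partition T P \<Longrightarrow> Pe \<subseteq> P \<Longrightarrow> norm (psum T P (\<lambda>s t. R (X s) (X t))
        - ((\<Sum>a\<in>S0 - {T}. R (X a) (lright X a)) + (\<Sum>a\<in>S0 - {0}. R (lleft X a) (X a))))
      \<le> 2 * real (card S0) * tol + K * (3 * \<delta>) powr (q - p) * C"
proof -
  obtain \<eta> where \<eta>: "0 < \<eta>" "\<And>a b. a \<in> S0 \<Longrightarrow> b \<in> S0 \<Longrightarrow> a < b \<Longrightarrow> 2 * \<eta> < b - a"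
    "\<And>a t. a \<in> S0 \<Longrightarrow> a < T \<Longrightarrow> t \<in> {a<..a + \<eta>} \<Longrightarrow> norm (R (X a) (X t) - R (X a) (lright X a)) \<le> tol"
    "\<And>a s. a \<in> S0 \<Longrightarrow> 0 < a \<Longrightarrow> s \<in> {a - \<eta>..<a} \<Longrightarrow> norm (R (X s) (X a) - R (lleft X a) (X a)) \<le> tol"
    using exists_jump_scale[OF S0(1,2) tol] by blast
  obtain P1 where P1: "is_partition T P1" and osc: "\<And>u v w w'. \<forall>z\<in>P1. z \<le> u \<or> v \<le> z \<Longrightarrow> 0 \<le> u \<Longrightarrow>
      v \<le> T \<Longrightarrow> w \<in> {u<..<v} \<Longrightarrow> w' \<in> {u<..<v} \<Longrightarrow> norm (X w - X w') < \<delta>"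
    using regulated_partition[OF \<delta>] by blast
  define Pe where "Pe = P1 \<union> S0 \<union> (\<lambda>a. a + \<eta>) ` {a \<in> S0. a < T} \<union> (\<lambda>a. a - \<eta>) ` {a \<in> S0. 0 < a}"
  have "a + \<eta> \<in> {0..T}" if "a \<in> S0" "a < T" for a
    using \<eta>(1) \<eta>(2)[OF that(1) S0(4) that(2)] that S0(2) by auto
  moreover have "a - \<eta> \<in> {0..T}" if "a \<in> S0" "0 < a" for a
    using \<eta>(1) \<eta>(2)[OF S0(3) that(1) that(2)] that S0(2) by auto
  ultimately have Pe: "is_partition T Pe"
    using P1 S0 unfolding is_partition_def Pe_def by auto
  have "norm (psum T P (\<lambda>s t. R (X s) (X t))
        - ((\<Sum>a\<in>S0 - {T}. R (X a) (lright X a)) + (\<Sum>a\<in>S0 - {0}. R (lleft X a) (X a))))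
      \<le> 2 * real (card S0) * tol + K * (3 * \<delta>) powr (q - p) * C"
    if P: "is_partition T P" "Pe \<subseteq> P" for P
  proof (rule remainder_sum_near_jumps[OF P(1) _ \<eta>(1,2) _ _ _ \<eta>(3,4)])
    show "S0 \<subseteq> P" "\<And>a. a \<in> S0 \<Longrightarrow> a < T \<Longrightarrow> a + \<eta> \<in> P" "\<And>a. a \<in> S0 \<Longrightarrow> 0 < a \<Longrightarrow> a - \<eta> \<in> P"
      using P(2) unfolding Pe_def by auto
    show "0 \<le> tol"
      using tol by simp
    fix s assume s: "s \<in> P - {T}" "s \<notin> S0" "pnext P s \<notin> S0"
    note next_s = partition_pnext[OF P(1) s(1)]
    show "norm (X (pnext P s) - X s) \<le> 3 * \<delta>"
    proof (rule increment_le_in_refinement[OF osc P(1) _ s(1)])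
      show "P1 \<subseteq> P"
        using P(2) unfolding Pe_def by auto
      show "norm (X (pnext P s) - lleft X (pnext P s)) < \<delta>"
        using big_left[of "pnext P s"] s(3) next_s by force
      show "norm (lright X s - X s) < \<delta>"
        using big_right[of s] s next_s by force
    qed
  qed
  with Pe show ?thesis
    by (rule that)
qed

lemma exists_marked_set:
  assumes \<delta>: "0 < \<delta>" and e: "0 < e"
  obtains S0 where "finite S0" "S0 \<subseteq> {0..T}" "0 \<in> S0" "T \<in> S0"
    "\<And>t. t \<in> {0<..T} \<Longrightarrow> \<delta> \<le> norm (X t - lleft X t) \<Longrightarrow> t \<in> S0"
    "\<And>t. t \<in> {0..<T} \<Longrightarrow> \<delta> \<le> norm (lright X t - X t) \<Longrightarrow> t \<in> S0"
    "norm ((\<Sum>a\<in>S0 - {T}. R (X a) (lright X a)) - infsum (\<lambda>t. R (X t) (lright X t)) {0..<T}) < e"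
    "norm ((\<Sum>a\<in>S0 - {0}. R (lleft X a) (X a)) - infsum (\<lambda>t. R (lleft X t) (X t)) {0<..T}) < e"
proof -
  obtain SL where SL: "finite SL" "SL \<subseteq> {0<..T}" "\<And>G. finite G \<Longrightarrow> SL \<subseteq> G \<Longrightarrow> G \<subseteq> {0<..T} \<Longrightarrow>
      norm ((\<Sum>a\<in>G. R (lleft X a) (X a)) - infsum (\<lambda>t. R (lleft X t) (X t)) {0<..T}) < e"
    using summable_on_finite_approx[OF abs_summable_summable[OF left_jumps_summable] e] by blast
  obtain SR where SR: "finite SR" "SR \<subseteq> {0..<T}" "\<And>G. finite G \<Longrightarrow> SR \<subseteq> G \<Longrightarrow> G \<subseteq> {0..<T} \<Longrightarrow>
      norm ((\<Sum>a\<in>G. R (X a) (lright X a)) - infsum (\<lambda>t. R (X t) (lright X t)) {0..<T}) < e"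
    using summable_on_finite_approx[OF abs_summable_summable[OF right_jumps_summable] e] by blast
  define S0 where "S0 = {0, T} \<union> {t \<in> {0<..T}. \<delta> \<le> norm (X t - lleft X t)}
    \<union> {t \<in> {0..<T}. \<delta> \<le> norm (lright X t - X t)} \<union> SL \<union> SR"
  have S0: "finite S0" "S0 \<subseteq> {0..T}" "0 \<in> S0" "T \<in> S0"
    unfolding S0_def using finite_large_left_jumps[OF \<delta>] finite_large_right_jumps[OF \<delta>] SL SR T_pos
    by auto
  show ?thesis
  proof (rule that[OF S0])
    show "norm ((\<Sum>a\<in>S0 - {T}. R (X a) (lright X a)) - infsum (\<lambda>t. R (X t) (lright X t)) {0..<T}) < e"
      using S0(1,2) SR(2) by (intro SR(3)) (auto simp: S0_def)
    show "norm ((\<Sum>a\<in>S0 - {0}. R (lleft X a) (X a)) - infsum (\<lambda>t. R (lleft X t) (X t)) {0<..T}) < e"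
      using S0(1,2) SL(2) by (intro SL(3)) (auto simp: S0_def)
  qed (auto simp: S0_def)
qed

theorem remainder_sums_rrs_lim:
  "rrs_lim T (\<lambda>P. psum T P (\<lambda>s t. R (X s) (X t)))
     (infsum (\<lambda>t. R (lleft X t) (X t)) {0<..T} + infsum (\<lambda>t. R (X t) (lright X t)) {0..<T})"
  unfolding rrs_lim_def
proof (intro allI impI)
  fix \<epsilon> :: real assume \<epsilon>: "0 < \<epsilon>"
  define JL JR where "JL t = R (lleft X t) (X t)" and "JR t = R (X t) (lright X t)" for t
  obtain x where x: "0 < x" "K * C * x powr (q - p) \<le> \<epsilon> / 4"
    using exists_pos_mult_powr_le[of "q - p" "K * C" "\<epsilon> / 4"] p_less_q K_nonneg C_nonneg \<epsilon> by auto
  define \<delta> where "\<delta> = x / 3"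
  have \<delta>: "0 < \<delta>" "K * (3 * \<delta>) powr (q - p) * C \<le> \<epsilon> / 4"
    unfolding \<delta>_def using x by (simp_all add: mult_ac)
  obtain S0 where S0: "finite S0" "S0 \<subseteq> {0..T}" "0 \<in> S0" "T \<in> S0"
    and big: "\<And>t. t \<in> {0<..T} \<Longrightarrow> \<delta> \<le> norm (X t - lleft X t) \<Longrightarrow> t \<in> S0"
      "\<And>t. t \<in> {0..<T} \<Longrightarrow> \<delta> \<le> norm (lright X t - X t) \<Longrightarrow> t \<in> S0"
    and tails: "norm (sum JR (S0 - {T}) - infsum JR {0..<T}) < \<epsilon> / 8"
      "norm (sum JL (S0 - {0}) - infsum JL {0<..T}) < \<epsilon> / 8"
    using exists_marked_set[OF \<delta>(1), of "\<epsilon> / 8"] \<epsilon> unfolding JL_def JR_def by auto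
  define tol where "tol = \<epsilon> / (8 * (real (card S0) + 1))"
  have tol: "0 < tol" "2 * real (card S0) * tol < \<epsilon> / 4"
    unfolding tol_def using \<epsilon> by (auto simp: field_simps)
  obtain Pe where Pe: "is_partition T Pe"
    "\<And>P. is_partition T P \<Longrightarrow> Pe \<subseteq> P \<Longrightarrow> norm (psum T P (\<lambda>s t. R (X s) (X t)) - (sum JR (S0 - {T}) + sum JL (S0 - {0})))
      \<le> 2 * real (card S0) * tol + K * (3 * \<delta>) powr (q - p) * C"
    using refinement_estimate[OF \<delta>(1) tol(1) S0 big] unfolding JL_def JR_def by blast
  show "\<exists>Pe. is_partition T Pe \<and> (\<forall>P. is_partition T P \<and> Pe \<subseteq> P \<longrightarrow> norm (psum T P (\<lambda>s t. R (X s) (X t))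
      - (infsum (\<lambda>t. R (lleft X t) (X t)) {0<..T} + infsum (\<lambda>t. R (X t) (lright X t)) {0..<T})) < \<epsilon>)"
  proof (intro exI[of _ Pe] conjI allI impI Pe(1))
    fix P assume "is_partition T P \<and> Pe \<subseteq> P"
    then have "norm (psum T P (\<lambda>s t. R (X s) (X t)) - (sum JR (S0 - {T}) + sum JL (S0 - {0})))
        \<le> 2 * real (card S0) * tol + K * (3 * \<delta>) powr (q - p) * C"
      using Pe(2) by blast
    then have "norm (psum T P (\<lambda>s t. R (X s) (X t)) - (sum JR (S0 - {T}) + sum JL (S0 - {0}))) < 3 * \<epsilon> / 4"
      using \<epsilon> tol(2) \<delta>(2) by linarith
    then show "norm (psum T P (\<lambda>s t. R (X s) (X t))
      - (infsum (\<lambda>t. R (lleft X t) (X t)) {0<..T} + infsum (\<lambda>t. R (X t) (lright X t)) {0..<T})) < \<epsilon>"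
      using tails norm_triangle_ineq[of "psum T P (\<lambda>s t. R (X s) (X t)) - (sum JR (S0 - {T}) + sum JL (S0 - {0}))"
          "(sum JR (S0 - {T}) - infsum JR {0..<T}) + (sum JL (S0 - {0}) - infsum JL {0<..T})"]
        norm_triangle_ineq[of "sum JR (S0 - {T}) - infsum JR {0..<T}" "sum JL (S0 - {0}) - infsum JL {0<..T}"]
      unfolding JL_def[symmetric] JR_def[symmetric] by (simp add: algebra_simps)
  qed
qed

lemma right_jumps_vanish_if_cadlag:
  assumes "cadlag_on T X"
  shows "infsum (\<lambda>t. R (X t) (lright X t)) {0..<T} = 0"
proof (rule infsum_0)
  fix t assume "t \<in> {0..<T}"
  then show "R (X t) (lright X t) = 0"
    using assms unfolding cadlag_on_def by (simp add: lright_eq remainder_diag)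
qed

lemma jumps_vanish_if_continuous:
  assumes "continuous_on {0..T} X"
  shows "infsum (\<lambda>t. R (lleft X t) (X t)) {0<..T} = 0" "infsum (\<lambda>t. R (X t) (lright X t)) {0..<T} = 0"
proof (rule infsum_0)
  fix t assume "t \<in> {0<..T}"
  then show "R (lleft X t) (X t) = 0"
    using continuous_on_Icc_one_sided_limits(2)[OF assms] by (simp add: lleft_eq remainder_diag)
next
  show "infsum (\<lambda>t. R (X t) (lright X t)) {0..<T} = 0"
  proof (rule infsum_0)
    fix t assume "t \<in> {0..<T}"
    then show "R (X t) (lright X t) = 0"
      using continuous_on_Icc_one_sided_limits(1)[OF assms] by (simp add: lright_eq remainder_diag)
  qed
qed

end

section \<open>The Ito formula\<close>

lemma pvar_remainder_taylor:
  fixes D :: "nat \<Rightarrow> 'v::banach \<Rightarrow> 'v list \<Rightarrow> 'u::banach"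
  assumes X: "finite_pvar p T X" "0 < p" "0 < T" and F: "Ckb (Suc n) F D" and p: "p < Suc n"
  obtains C K where "pvar_remainder p T C X (taylor_remainder F D n) K (Suc n)"
proof -
  obtain C where C: "pvar_path p T C X"
    using pvar_path_if_finite_pvar[OF X] by blast
  obtain K where K: "0 \<le> K" "\<And>x y. norm (taylor_remainder F D n x y) \<le> K * norm (y - x) ^ Suc n"
    using taylor_remainder_bound[OF F] by blast
  have "norm (taylor_remainder F D n x y) \<le> K * norm (y - x) powr real (Suc n)" for x y
  proof (cases "x = y")
    case False
    then show ?thesis
      using K(2)[of x y] powr_realpow[of "norm (y - x)" "Suc n"] by simp
  qed (use K(2)[of x y] in simp)
  moreover have "isCont (\<lambda>x. taylor_remainder F D n x y) x" for x y
    unfolding isCont_def by (rule taylor_remainder_tendsto[OF F tendsto_ident_at tendsto_const])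
  moreover have "isCont (taylor_remainder F D n x) y" for x y
    unfolding isCont_def by (rule taylor_remainder_tendsto[OF F tendsto_const tendsto_ident_at])
  ultimately have "pvar_remainder p T C X (taylor_remainder F D n) K (Suc n)"
    using p K(1) by (intro pvar_remainder.intro[OF C] pvar_remainder_axioms.intro)
  then show ?thesis
    by (rule that)
qed

theorem theorem3p2:
  fixes p T :: real and X :: "real \<Rightarrow> 'v::banach" and F :: "'v \<Rightarrow> 'u::banach"
    and D :: "nat \<Rightarrow> 'v \<Rightarrow> 'v list \<Rightarrow> 'u" and n :: nat
  assumes "p \<ge> 1" and "n = nat \<lfloor>p\<rfloor>" and "0 < T"
    and "finite_pvar p T X"
    and "Ckb (Suc n) F D"
  shows "(\<exists>K. rrs_lim T (rough_sum D n T X) K)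
       \<and> countable {t\<in>{0<..T}. jump_left F D n X t \<noteq> 0}
       \<and> countable {t\<in>{0..<T}. jump_right F D n X t \<noteq> 0}
       \<and> (\<lambda>t. norm (jump_left F D n X t)) summable_on {0<..T}
       \<and> (\<lambda>t. norm (jump_right F D n X t)) summable_on {0..<T}
       \<and> F (X T) - F (X 0) = rrs_integral T (rough_sum D n T X)
            + infsum (jump_left F D n X) {0<..T} + infsum (jump_right F D n X) {0..<T}
       \<and> (cadlag_on T X \<longrightarrow>
           F (X T) - F (X 0) = rrs_integral T (rough_sum D n T X) + infsum (jump_left F D n X) {0<..T})
       \<and> (continuous_on {0..T} X \<longrightarrow> F (X T) - F (X 0) = rrs_integral T (rough_sum D n T X))"
proof -
  have "0 < p" "p < Suc n"
    using assms(1,2) by linarith+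
  then obtain C K where "pvar_remainder p T C X (taylor_remainder F D n) K (Suc n)"
    using pvar_remainder_taylor[OF assms(4) _ assms(3,5)] by blast
  then interpret pvar_remainder p T C X "taylor_remainder F D n" K "Suc n" .
  note jumps = jump_left_eq_taylor_remainder jump_right_eq_taylor_remainder
  have lim: "rrs_lim T (rough_sum D n T X)
      (F (X T) - F (X 0) - (infsum (jump_left F D n X) {0<..T} + infsum (jump_right F D n X) {0..<T}))"
    unfolding jumps by (rule rrs_lim_const_minus[OF remainder_sums_rrs_lim rough_sum_eq_taylor_remainder])
  then have "\<exists>K. rrs_lim T (rough_sum D n T X) K"
    by blast
  moreover have "F (X T) - F (X 0) = rrs_integral T (rough_sum D n T X)
      + infsum (jump_left F D n X) {0<..T} + infsum (jump_right F D n X) {0..<T}"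
    using rrs_integral_eqI[OF lim] by (simp add: algebra_simps)
  moreover have summable: "(\<lambda>t. norm (jump_left F D n X t)) summable_on {0<..T}"
    "(\<lambda>t. norm (jump_right F D n X t)) summable_on {0..<T}"
    unfolding jumps by (fact left_jumps_summable right_jumps_summable)+
  moreover note summable[THEN abs_summable_countable]
  moreover have "cadlag_on T X \<Longrightarrow> infsum (jump_right F D n X) {0..<T} = 0"
    "continuous_on {0..T} X \<Longrightarrow> infsum (jump_left F D n X) {0<..T} = 0"
    "continuous_on {0..T} X \<Longrightarrow> infsum (jump_right F D n X) {0..<T} = 0"
    unfolding jumps by (fact right_jumps_vanish_if_cadlag jumps_vanish_if_continuous)+
  ultimately show ?thesis
    by auto
qed

end
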